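(* Let $\sigma>0$, $\rho_1\ge1$, let $\beta_n=\rho_1^n$ for $n\ge0$, and let $\vec\alpha=(\alpha_n)_{n\ge0}$ be a non-negative sequence, not identically zero, with $$\sum_{m=0}^\infty m\,\alpha_m\rho_1^m<\infty.$$ For each $L\ge1$ let $(\gamma^{(L)}_0,\dots,\gamma^{(L)}_L)$ be a random Motzkin path sampled from $\Pr_L$ (defined in the context), and set $\gamma^{(L)}_k:=0$ for $k>L$. Then the family $\{\gamma^{(L)}_L\}_{L\ge1}$ is not tight, and as $L\to\infty$, $$\Big(\{\gamma^{(L)}_k\}_{k\ge0},\ \{\gamma^{(L)}_{L-k}-\gamma^{(L)}_{L-k+1}\}_{k\ge1}\Big)\Rightarrow\Big(\{Z_k\}_{k\ge0},\{\xi_k\}_{k\ge1}\Big)$$ in the sense of convergence of finite-dimensional distributions (for $k>L$ the increments are set to $0$), where: - $\{Z_k\}_{k\ge0}$ is a Markov chain on $\mathbb Z_{\ge0}$ with transition probabilities $\mathsf Q^{(\rho_1)}_{n,m}$ (defined in the context) and initial law $$\Pr(Z_0=n)=\frac{1}{\mathfrak C_{\vec\alpha,\rho_1}}\,\alpha_n\,\frac{\rho_1^{n+1}-\rho_1^{-(n+1)}}{\rho_1-\rho_1^{-1}},\quad n\ge0,\qquad \mathfrak C_{\vec\alpha,\rho_1}=\sum_{n\ge0}\alpha_n\frac{\rho_1^{n+1}-\rho_1^{-(n+1)}}{\rho_1-\rho_1^{-1}},$$ where for $\rho_1=1$ the ratio $\frac{\rho_1^{n+1}-\rho_1^{-(n+1)}}{\rho_1-\rho_1^{-1}}$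 is interpreted as $n+1$; - $\{\xi_k\}_{k\ge1}$ are i.i.d. with $\Pr(\xi_1=1)=\frac{1/\rho_1}{\rho_1+1/\rho_1+\sigma}$, $\Pr(\xi_1=0)=\frac{\sigma}{\rho_1+1/\rho_1+\sigma}$, $\Pr(\xi_1=-1)=\frac{\rho_1}{\rho_1+1/\rho_1+\sigma}$; - the two families are independent.
   Context: A Motzkin path of length $L\in\mathbb Z_{\ge1}$ is a sequence $\vec\gamma=(\gamma_0,\dots,\gamma_L)$ of non-negative integers with $|\gamma_k-\gamma_{k-1}|\le1$; $\mathcal M^{(L)}$ is the set of all such paths. Its weight is $w(\vec\gamma)=\sigma^{\#\{k:\ \gamma_k=\gamma_{k-1}\}}$. With boundary weights $\vec\alpha,\vec\beta$, $\mathfrak C_{\vec\alpha,\vec\beta,L}=\sum_{\vec\gamma\in\mathcal M^{(L)}}\alpha_{\gamma_0}\beta_{\gamma_L}w(\vec\gamma)$ (finite under the hypotheses) and $\Pr_L(\vec\gamma)=\alpha_{\gamma_0}\beta_{\gamma_L}w(\vec\gamma)/\mathfrak C_{\vec\alpha,\vec\beta,L}$. Transition kernels: for $\rho>0$, $\rho\neq1$, $$\mathsf Q^{(\rho)}_{n,m}=\frac{1}{\rho+1/\rho+\sigma}\begin{cases}\frac{\rho^{n+2}-\rho^{-(n+2)}}{\rho^{n+1}-\rho^{-(n+1)}}, & m=n+1,\\ \sigma, & m=n,\\ \frac{\rho^{n}-\rho^{-n}}{\rho^{n+1}-\rho^{-(n+1)}}, & m=n-1,\\ 0,&\text{otherwise},\end{cases}$$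 and $\mathsf Q^{(1)}_{n,m}$ (the limit as $\rho\to1$) equals $\frac{1}{2+\sigma}\frac{n+2}{n+1}$ if $m=n+1$, $\frac{\sigma}{2+\sigma}$ if $m=n$, $\frac{1}{2+\sigma}\frac{n}{n+1}$ if $m=n-1\ge0$, and $0$ otherwise. *)

theory Defs
  imports "HOL-Analysis.Analysis"
begin

text \<open>A Motzkin path of length L, represented as a function nat => nat which is
  extended by 0 beyond index L (the convention of the paper: gamma_k := 0 for k > L).\<close>
definition motzkin :: "nat \<Rightarrow> (nat \<Rightarrow> nat) \<Rightarrow> bool" where
  "motzkin L \<gamma> \<longleftrightarrow>
     (\<forall>k\<in>{1..L}. \<bar>int (\<gamma> k) - int (\<gamma> (k - 1))\<bar> \<le> 1) \<and> (\<forall>k>L. \<gamma> k = 0)"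

definition mweight :: "real \<Rightarrow> nat \<Rightarrow> (nat \<Rightarrow> nat) \<Rightarrow> real" where
  "mweight \<sigma> L \<gamma> = \<sigma> ^ card {k\<in>{1..L}. \<gamma> k = \<gamma> (k - 1)}"

definition pathmass :: "(nat \<Rightarrow> real) \<Rightarrow> (nat \<Rightarrow> real) \<Rightarrow> real \<Rightarrow> nat \<Rightarrow> (nat \<Rightarrow> nat) \<Rightarrow> real" where
  "pathmass \<alpha> \<beta> \<sigma> L \<gamma> = \<alpha> (\<gamma> 0) * \<beta> (\<gamma> L) * mweight \<sigma> L \<gamma>"

definition Cpart :: "(nat \<Rightarrow> real) \<Rightarrow> (nat \<Rightarrow> real) \<Rightarrow> real \<Rightarrow> nat \<Rightarrow> real" where
  "Cpart \<alpha> \<beta> \<sigma> L = infsum (pathmass \<alpha> \<beta> \<sigma> L) {\<gamma>. motzkin L \<gamma>}"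

definition PrL :: "(nat \<Rightarrow> real) \<Rightarrow> (nat \<Rightarrow> real) \<Rightarrow> real \<Rightarrow> nat \<Rightarrow> ((nat \<Rightarrow> nat) \<Rightarrow> bool) \<Rightarrow> real" where
  "PrL \<alpha> \<beta> \<sigma> L E =
     infsum (pathmass \<alpha> \<beta> \<sigma> L) {\<gamma>. motzkin L \<gamma> \<and> E \<gamma>} / Cpart \<alpha> \<beta> \<sigma> L"

definition Qker :: "real \<Rightarrow> real \<Rightarrow> nat \<Rightarrow> nat \<Rightarrow> real" where
  "Qker \<rho> \<sigma> n m =
    (if \<rho> = 1 then
       (if m = n + 1 then 1 / (2 + \<sigma>) * ((real n + 2) / (real n + 1))
        else if m = n then \<sigma> / (2 + \<sigma>)
        else if m + 1 = n then 1 / (2 + \<sigma>) * (real n / (real n + 1))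
        else 0)
     else
       1 / (\<rho> + 1 / \<rho> + \<sigma>) *
       (if m = n + 1 then (\<rho> ^ (n + 2) - inverse \<rho> ^ (n + 2)) / (\<rho> ^ (n + 1) - inverse \<rho> ^ (n + 1))
        else if m = n then \<sigma>
        else if m + 1 = n then (\<rho> ^ n - inverse \<rho> ^ n) / (\<rho> ^ (n + 1) - inverse \<rho> ^ (n + 1))
        else 0))"

definition hfun :: "real \<Rightarrow> nat \<Rightarrow> real" where
  "hfun \<rho> n = (if \<rho> = 1 then real n + 1
               else (\<rho> ^ (n + 1) - inverse \<rho> ^ (n + 1)) / (\<rho> - inverse \<rho>))"

definition Cinit :: "(nat \<Rightarrow> real) \<Rightarrow> real \<Rightarrow> real" where
  "Cinit \<alpha> \<rho> = infsum (\<lambda>n. \<alpha> n * hfun \<rho> n) UNIV"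

definition Z0law :: "(nat \<Rightarrow> real) \<Rightarrow> real \<Rightarrow> nat \<Rightarrow> real" where
  "Z0law \<alpha> \<rho> n = \<alpha> n * hfun \<rho> n / Cinit \<alpha> \<rho>"

definition xilaw :: "real \<Rightarrow> real \<Rightarrow> int \<Rightarrow> real" where
  "xilaw \<rho> \<sigma> x =
     (if x = 1 then 1 / \<rho> else if x = 0 then \<sigma> else if x = -1 then \<rho> else 0)
       / (\<rho> + 1 / \<rho> + \<sigma>)"

definition incr :: "nat \<Rightarrow> (nat \<Rightarrow> nat) \<Rightarrow> nat \<Rightarrow> int" where
  "incr L \<gamma> k = (if k \<le> L then int (\<gamma> (L - k)) - int (\<gamma> (L - k + 1)) else 0)"

end

theory Submission
  imports Defs
begin

(*
  Write T g i = g (i - 1) [i > 0] + \<sigma> g i + g (i + 1) (motzkin_op \<sigma>) and \<beta> n = \<rho> ^ n. Summing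
  over the paths with a given start turns the weight of an event into iterates of T: the
  partition function is \<Sigma> a. \<alpha> a (T^L \<beta>) a, and a cylinder event fixing the first K heights z
  and the last K increments x has weight \<alpha> (z 0) \<Prod> (step weights of z) (T^M g) (z K), where
  L = K + M + K and g is obtained from \<beta> by the K prescribed backward steps; g differs from
  (\<Prod> increment weights) \<beta> only on [0, K).

  The function hfun \<rho> is a positive eigenfunction of T with eigenvalue \<lambda> = \<rho> + 1/\<rho> + \<sigma>, and
  T^L \<beta> a ~ \<kappa> c_L hfun \<rho> a.  For \<rho> > 1, c_L = \<lambda>^L: \<beta> is a multiple of hfun \<rho> plus a bounded
  function, and T^L of a bounded function grows at most like (2 + \<sigma>)^L < \<lambda>^L.  For \<rho> = 1,
  c_L is the weight of free walks on Z returning to 0 after L steps; the reflection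
  principle expresses T^L in terms of free walks, and the ratio limit theorem
  free_walks \<sigma> L d / free_walks \<sigma> L 0 -> 1 (proved via Cauchy-Schwarz and log-convexity of
  the return weights) gives the asymptotics.  In both cases T^L of a finitely supported
  function is o(c_L), so the endpoint escapes to infinity (no tightness), and dividing the
  cylinder weight by the partition function gives in the limit the Doob transform of the
  step weights by hfun \<rho> times independent increments.
*)

section \<open>Sums over Motzkin paths as transfer operators\<close>

definition motzkin_nbrs :: "nat \<Rightarrow> nat set" where
  "motzkin_nbrs i = {i - 1 .. i + 1}"

definition transfer :: "(nat \<Rightarrow> nat \<Rightarrow> real) \<Rightarrow> (nat \<Rightarrow> real) \<Rightarrow> nat \<Rightarrow> real" where
  "transfer w g i = (\<Sum>m\<in>motzkin_nbrs i. w i m * g m)"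

fun transfers :: "(nat \<Rightarrow> nat \<Rightarrow> nat \<Rightarrow> real) \<Rightarrow> nat \<Rightarrow> (nat \<Rightarrow> real) \<Rightarrow> nat \<Rightarrow> real" where
  "transfers w 0 g = g"
| "transfers w (Suc n) g = transfers w n (transfer (w (Suc n)) g)"

definition motzkin_from :: "nat \<Rightarrow> nat \<Rightarrow> (nat \<Rightarrow> nat) set" where
  "motzkin_from L a = {\<gamma>. motzkin L \<gamma> \<and> \<gamma> 0 = a}"

definition path_weight :: "(nat \<Rightarrow> nat \<Rightarrow> nat \<Rightarrow> real) \<Rightarrow> nat \<Rightarrow> (nat \<Rightarrow> nat) \<Rightarrow> real" where
  "path_weight w L \<gamma> = (\<Prod>t\<in>{1..L}. w t (\<gamma> (t - 1)) (\<gamma> t))"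

lemma mem_motzkin_nbrs: "m \<in> motzkin_nbrs i \<longleftrightarrow> \<bar>int m - int i\<bar> \<le> 1"
  unfolding motzkin_nbrs_def by auto

lemma finite_motzkin_nbrs [simp]: "finite (motzkin_nbrs i)"
  unfolding motzkin_nbrs_def by simp

lemma motzkin_from_0: "motzkin_from 0 a = {\<lambda>k. if k = 0 then a else 0}"
  unfolding motzkin_from_def motzkin_def by (auto simp: fun_eq_iff)

lemma motzkin_from_Suc:
  "motzkin_from (Suc L) a =
     (\<lambda>(\<gamma>, m). \<gamma>(Suc L := m)) ` (SIGMA \<gamma>:motzkin_from L a. motzkin_nbrs (\<gamma> L))"
proof (intro equalityI subsetI)
  fix \<delta> assume \<delta>: "\<delta> \<in> motzkin_from (Suc L) a"
  let ?\<gamma> = "\<delta>(Suc L := 0)"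
  have "?\<gamma> \<in> motzkin_from L a"
    using \<delta> unfolding motzkin_from_def motzkin_def by (auto simp: less_Suc_eq)
  moreover have "\<delta> (Suc L) \<in> motzkin_nbrs (?\<gamma> L)"
    using \<delta> unfolding motzkin_from_def motzkin_def mem_motzkin_nbrs
    by (auto dest: bspec[of _ _ "Suc L"])
  ultimately show "\<delta> \<in> (\<lambda>(\<gamma>, m). \<gamma>(Suc L := m)) ` (SIGMA \<gamma>:motzkin_from L a. motzkin_nbrs (\<gamma> L))"
    by (intro image_eqI[where x = "(?\<gamma>, \<delta> (Suc L))"]) auto
next
  fix \<delta> assume "\<delta> \<in> (\<lambda>(\<gamma>, m). \<gamma>(Suc L := m)) ` (SIGMA \<gamma>:motzkin_from L a. motzkin_nbrs (\<gamma> L))"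
  then obtain \<gamma> m where \<gamma>: "\<gamma> \<in> motzkin_from L a" and m: "m \<in> motzkin_nbrs (\<gamma> L)"
    and \<delta>: "\<delta> = \<gamma>(Suc L := m)"
    by auto
  have "\<bar>int (\<delta> k) - int (\<delta> (k - 1))\<bar> \<le> 1" if "k \<in> {1..Suc L}" for k
    using that \<gamma> m \<delta> unfolding motzkin_from_def motzkin_def mem_motzkin_nbrs
    by (cases "k = Suc L") auto
  then show "\<delta> \<in> motzkin_from (Suc L) a"
    using \<gamma> \<delta> unfolding motzkin_from_def motzkin_def by auto
qed

lemma inj_on_extend_path:
  "inj_on (\<lambda>(\<gamma>, m). \<gamma>(Suc L := m)) (SIGMA \<gamma>:motzkin_from L a. motzkin_nbrs (\<gamma> L))"
proof (rule inj_onI, clarsimp)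
  fix \<gamma>1 m1 \<gamma>2 m2
  assume \<gamma>: "\<gamma>1 \<in> motzkin_from L a" "\<gamma>2 \<in> motzkin_from L a"
    and eq: "\<gamma>1(Suc L := m1) = \<gamma>2(Suc L := m2)"
  have "\<gamma>1 (Suc L) = \<gamma>2 (Suc L)"
    using \<gamma> unfolding motzkin_from_def motzkin_def by auto
  then have "\<gamma>1 = \<gamma>2"
    using eq by (metis fun_upd_triv fun_upd_upd)
  moreover have "m1 = m2"
    using fun_cong[OF eq, of "Suc L"] by simp
  ultimately show "\<gamma>1 = \<gamma>2 \<and> m1 = m2" ..
qed

lemma finite_motzkin_from: "finite (motzkin_from L a)"
  by (induction L) (auto simp: motzkin_from_0 motzkin_from_Suc)

lemma path_weight_extend:
  "path_weight w (Suc L) (\<gamma>(Suc L := m)) = path_weight w L \<gamma> * w (Suc L) (\<gamma> L) m"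
proof -
  have "(\<Prod>t\<in>{1..L}. w t ((\<gamma>(Suc L := m)) (t - 1)) ((\<gamma>(Suc L := m)) t)) = path_weight w L \<gamma>"
    unfolding path_weight_def by (intro prod.cong) auto
  then show ?thesis
    unfolding path_weight_def by (simp add: prod.cl_ivl_Suc)
qed

theorem sum_motzkin_from:
  "(\<Sum>\<gamma>\<in>motzkin_from L a. path_weight w L \<gamma> * g (\<gamma> L)) = transfers w L g a"
proof (induction L arbitrary: g)
  case 0
  show ?case by (simp add: motzkin_from_0 path_weight_def)
next
  case (Suc L)
  let ?S = "SIGMA \<gamma>:motzkin_from L a. motzkin_nbrs (\<gamma> L)"
  have "(\<Sum>\<gamma>\<in>motzkin_from (Suc L) a. path_weight w (Suc L) \<gamma> * g (\<gamma> (Suc L)))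
      = (\<Sum>(\<gamma>, m)\<in>?S. path_weight w L \<gamma> * w (Suc L) (\<gamma> L) m * g m)"
    unfolding motzkin_from_Suc sum.reindex[OF inj_on_extend_path]
    by (intro sum.cong) (auto simp: path_weight_extend)
  also have "\<dots> = (\<Sum>\<gamma>\<in>motzkin_from L a. path_weight w L \<gamma> * transfer (w (Suc L)) g (\<gamma> L))"
    by (subst sum.Sigma[symmetric])
       (simp_all add: finite_motzkin_from transfer_def sum_distrib_left mult.assoc)
  also have "\<dots> = transfers w (Suc L) g a"
    using Suc.IH by simp
  finally show ?case .
qed

lemma transfers_add: "transfers w (n + m) g = transfers w n (transfers (\<lambda>t. w (t + n)) m g)"
  by (induction m arbitrary: g) (simp_all add: add.commute)

lemma transfers_cong:
  "(\<And>t. t \<in> {1..n} \<Longrightarrow> w t = w' t) \<Longrightarrow> transfers w n g = transfers w' n g"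
  by (induction n arbitrary: g) auto

definition step_weight :: "real \<Rightarrow> nat \<Rightarrow> nat \<Rightarrow> real" where
  "step_weight \<sigma> i m = (if m \<in> motzkin_nbrs i then if m = i then \<sigma> else 1 else 0)"

definition motzkin_op :: "real \<Rightarrow> (nat \<Rightarrow> real) \<Rightarrow> nat \<Rightarrow> real" where
  "motzkin_op \<sigma> g i = (if i = 0 then 0 else g (i - 1)) + \<sigma> * g i + g (i + 1)"

lemma step_weight_eq:
  "step_weight \<sigma> i m =
     (if m = i + 1 then 1 else if m = i then \<sigma> else if m + 1 = i then 1 else 0)"
  unfolding step_weight_def mem_motzkin_nbrs by auto

lemma transfer_step_weight: "transfer (step_weight \<sigma>) g = motzkin_op \<sigma> g"
proof
  fix i
  show "transfer (step_weight \<sigma>) g i = motzkin_op \<sigma> g i"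
  proof (cases i)
    case 0
    then have "motzkin_nbrs i = {0, 1}"
      unfolding motzkin_nbrs_def by auto
    then show ?thesis
      using 0 by (simp add: transfer_def motzkin_op_def step_weight_eq)
  next
    case (Suc j)
    then have "motzkin_nbrs i = {j, Suc j, Suc (Suc j)}"
      unfolding motzkin_nbrs_def by auto
    then show ?thesis
      using Suc by (simp add: transfer_def motzkin_op_def step_weight_eq)
  qed
qed

lemma transfers_step_weight: "transfers (\<lambda>_. step_weight \<sigma>) n g = (motzkin_op \<sigma> ^^ n) g"
  by (induction n arbitrary: g) (simp_all add: transfer_step_weight funpow_Suc_right del: funpow.simps)

lemma path_weight_nonneg: "\<sigma> \<ge> 0 \<Longrightarrow> path_weight (\<lambda>_. step_weight \<sigma>) L \<gamma> \<ge> 0"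
  unfolding path_weight_def step_weight_def by (intro prod_nonneg) auto

lemma mweight_eq_path_weight:
  assumes "motzkin L \<gamma>"
  shows "mweight \<sigma> L \<gamma> = path_weight (\<lambda>_. step_weight \<sigma>) L \<gamma>"
proof -
  have "path_weight (\<lambda>_. step_weight \<sigma>) L \<gamma> = (\<Prod>t\<in>{1..L}. if \<gamma> t = \<gamma> (t - 1) then \<sigma> else 1)"
    unfolding path_weight_def step_weight_def
    using assms by (intro prod.cong) (auto simp: motzkin_def mem_motzkin_nbrs)
  also have "\<dots> = (\<Prod>t\<in>{k\<in>{1..L}. \<gamma> k = \<gamma> (k - 1)}. \<sigma>)"
    by (subst prod.inter_filter) auto
  finally show ?thesis
    unfolding mweight_def by simp
qed

lemma pathmass_eq:
  "motzkin L \<gamma> \<Longrightarrow> pathmass \<alpha> \<beta> \<sigma> L \<gamma> = \<alpha> (\<gamma> 0) * (path_weight (\<lambda>_. step_weight \<sigma>) L \<gamma> * \<beta> (\<gamma> L))"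
  unfolding pathmass_def by (simp add: mweight_eq_path_weight)

section \<open>Endpoint and cylinder events\<close>

lemma has_sum_UN_disjoint:
  fixes f :: "'b \<Rightarrow> real"
  assumes f: "\<And>x. x \<in> A \<Longrightarrow> (f has_sum s x) (B x)" and s: "(s has_sum S) A"
    and nonneg: "\<And>x y. x \<in> A \<Longrightarrow> y \<in> B x \<Longrightarrow> f y \<ge> 0" and disj: "disjoint_family_on B A"
  shows "(f has_sum S) (\<Union>x\<in>A. B x)"
proof -
  have "((f \<circ> snd) has_sum S) (Sigma A B)"
    using f s nonneg
    by (intro has_sum_SigmaI summable_on_SigmaI[where g = s]) (auto dest: has_sum_imp_summable)
  moreover have "inj_on snd (Sigma A B)"
    using disj by (intro inj_onI) (force simp: disjoint_family_on_def)
  moreover have "snd ` Sigma A B = (\<Union>x\<in>A. B x)"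
    by force
  ultimately show ?thesis
    by (metis has_sum_reindex)
qed

theorem has_sum_pathmass_endpoint:
  assumes \<alpha>: "\<And>n. \<alpha> n \<ge> 0" and \<beta>: "\<And>n. \<beta> n \<ge> 0" and \<sigma>: "\<sigma> \<ge> 0"
    and summable: "summable (\<lambda>a. \<alpha> a * (motzkin_op \<sigma> ^^ L) (\<lambda>j. if P j then \<beta> j else 0) a)"
  shows "(pathmass \<alpha> \<beta> \<sigma> L has_sum (\<Sum>a. \<alpha> a * (motzkin_op \<sigma> ^^ L) (\<lambda>j. if P j then \<beta> j else 0) a))
           {\<gamma>. motzkin L \<gamma> \<and> P (\<gamma> L)}"
proof -
  let ?B = "\<lambda>a. {\<gamma>\<in>motzkin_from L a. P (\<gamma> L)}"
  let ?s = "\<lambda>a. \<alpha> a * (motzkin_op \<sigma> ^^ L) (\<lambda>j. if P j then \<beta> j else 0) a"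
  have nonneg: "pathmass \<alpha> \<beta> \<sigma> L \<gamma> \<ge> 0" if "motzkin L \<gamma>" for \<gamma>
    using that \<alpha> \<beta> path_weight_nonneg[OF \<sigma>] by (simp add: pathmass_eq)
  have sum_B: "sum (pathmass \<alpha> \<beta> \<sigma> L) (?B a) = ?s a" for a
  proof -
    have "sum (pathmass \<alpha> \<beta> \<sigma> L) (?B a)
        = (\<Sum>\<gamma>\<in>motzkin_from L a. if P (\<gamma> L) then pathmass \<alpha> \<beta> \<sigma> L \<gamma> else 0)"
      by (simp add: sum.inter_filter finite_motzkin_from)
    also have "\<dots> = \<alpha> a * (\<Sum>\<gamma>\<in>motzkin_from L a.
                     path_weight (\<lambda>_. step_weight \<sigma>) L \<gamma> * (if P (\<gamma> L) then \<beta> (\<gamma> L) else 0))"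
      unfolding sum_distrib_left by (intro sum.cong) (auto simp: motzkin_from_def pathmass_eq)
    also have "\<dots> = ?s a"
      using sum_motzkin_from[where w = "\<lambda>_. step_weight \<sigma>" and g = "\<lambda>j. if P j then \<beta> j else 0"]
      by (simp add: transfers_step_weight)
    finally show ?thesis .
  qed
  have "(pathmass \<alpha> \<beta> \<sigma> L has_sum ?s a) (?B a)" for a
    using has_sum_finite[of "?B a" "pathmass \<alpha> \<beta> \<sigma> L"] sum_B[of a]
    by (simp add: finite_motzkin_from)
  moreover have "(?s has_sum (\<Sum>a. ?s a)) UNIV"
  proof (rule sums_nonneg_imp_has_sum)
    show "?s sums (\<Sum>a. ?s a)"
      using summable by (simp add: summable_sums)
    show "?s a \<ge> 0" for a
      unfolding sum_B[symmetric] by (intro sum_nonneg nonneg) (simp add: motzkin_from_def)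
  qed
  ultimately have "(pathmass \<alpha> \<beta> \<sigma> L has_sum (\<Sum>a. ?s a)) (\<Union>a. ?B a)"
    by (rule has_sum_UN_disjoint)
       (auto simp: motzkin_from_def disjoint_family_on_def intro: nonneg)
  moreover have "(\<Union>a. ?B a) = {\<gamma>. motzkin L \<gamma> \<and> P (\<gamma> L)}"
    by (auto simp: motzkin_from_def)
  ultimately show ?thesis
    by simp
qed

definition cylinder_event :: "nat \<Rightarrow> (nat \<Rightarrow> nat) \<Rightarrow> (nat \<Rightarrow> int) \<Rightarrow> nat \<Rightarrow> (nat \<Rightarrow> nat) \<Rightarrow> bool" where
  "cylinder_event K z x L \<gamma> \<longleftrightarrow> (\<forall>k\<le>K. \<gamma> k = z k) \<and> (\<forall>k\<in>{1..K}. incr L \<gamma> k = x k)"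

text \<open>\<open>cylinder_event\<close> as a condition on each step \<open>(t, \<gamma> (t - 1), \<gamma> t)\<close>, so that it factors
  through \<open>path_weight\<close>.\<close>

definition cylinder_constraint ::
    "nat \<Rightarrow> nat \<Rightarrow> (nat \<Rightarrow> nat) \<Rightarrow> (nat \<Rightarrow> int) \<Rightarrow> nat \<Rightarrow> nat \<Rightarrow> nat \<Rightarrow> bool" where
  "cylinder_constraint K L z x t i m \<longleftrightarrow>
     (t \<le> K \<longrightarrow> i = z (t - 1) \<and> m = z t) \<and> (L - K < t \<longrightarrow> int i - int m = x (L + 1 - t))"

definition restricted_weight ::
    "real \<Rightarrow> (nat \<Rightarrow> nat \<Rightarrow> nat \<Rightarrow> bool) \<Rightarrow> nat \<Rightarrow> nat \<Rightarrow> nat \<Rightarrow> real" where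
  "restricted_weight \<sigma> P t i m = (if P t i m then step_weight \<sigma> i m else 0)"

lemma path_weight_restricted:
  "path_weight (restricted_weight \<sigma> P) L \<gamma> =
     (if \<forall>t\<in>{1..L}. P t (\<gamma> (t - 1)) (\<gamma> t) then path_weight (\<lambda>_. step_weight \<sigma>) L \<gamma> else 0)"
proof (cases "\<forall>t\<in>{1..L}. P t (\<gamma> (t - 1)) (\<gamma> t)")
  case True
  then show ?thesis
    unfolding path_weight_def restricted_weight_def by (auto intro: prod.cong)
next
  case False
  then show ?thesis
    unfolding path_weight_def restricted_weight_def by (auto intro: prod_zero)
qed

lemma cylinder_event_iff_constraint:
  assumes KL: "K + K \<le> L" and \<gamma>0: "\<gamma> 0 = z 0"
  shows "cylinder_event K z x L \<gamma> \<longleftrightarrow> (\<forall>t\<in>{1..L}. cylinder_constraint K L z x t (\<gamma> (t - 1)) (\<gamma> t))"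
proof
  assume cyl: "cylinder_event K z x L \<gamma>"
  show "\<forall>t\<in>{1..L}. cylinder_constraint K L z x t (\<gamma> (t - 1)) (\<gamma> t)"
  proof
    fix t assume t: "t \<in> {1..L}"
    have "int (\<gamma> (t - 1)) - int (\<gamma> t) = x (L + 1 - t)" if "L - K < t"
    proof -
      have k: "L + 1 - t \<in> {1..K}" "L + 1 - t \<le> L" "L - (L + 1 - t) = t - 1" "t - 1 + 1 = t"
        using t that KL by auto
      have "int (\<gamma> (t - 1)) - int (\<gamma> t) = incr L \<gamma> (L + 1 - t)"
        by (simp only: incr_def if_P[OF k(2)] k(3) k(4))
      also have "\<dots> = x (L + 1 - t)"
        using cyl k(1) unfolding cylinder_event_def by blast
      finally show ?thesis .
    qed
    moreover have "t \<le> K \<longrightarrow> \<gamma> (t - 1) = z (t - 1) \<and> \<gamma> t = z t"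
      using cyl unfolding cylinder_event_def by auto
    ultimately show "cylinder_constraint K L z x t (\<gamma> (t - 1)) (\<gamma> t)"
      unfolding cylinder_constraint_def by blast
  qed
next
  assume C: "\<forall>t\<in>{1..L}. cylinder_constraint K L z x t (\<gamma> (t - 1)) (\<gamma> t)"
  have "\<gamma> k = z k" if k: "k \<le> K" for k
  proof (cases k)
    case 0
    then show ?thesis using \<gamma>0 by simp
  next
    case (Suc j)
    then have "k \<in> {1..L}" using k KL by auto
    then show ?thesis using C k unfolding cylinder_constraint_def by auto
  qed
  moreover have "incr L \<gamma> k = x k" if k: "k \<in> {1..K}" for k
  proof -
    have t: "L - k + 1 \<in> {1..L}" "L - K < L - k + 1" "L - k + 1 - 1 = L - k" "L + 1 - (L - k + 1) = k"
      using k KL by auto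
    have "incr L \<gamma> k = int (\<gamma> (L - k + 1 - 1)) - int (\<gamma> (L - k + 1))"
      using k KL unfolding incr_def t(3) by simp
    also have "\<dots> = x (L + 1 - (L - k + 1))"
      using C t(1,2) unfolding cylinder_constraint_def by blast
    also have "\<dots> = x k"
      by (simp only: t(4))
    finally show ?thesis .
  qed
  ultimately show "cylinder_event K z x L \<gamma>"
    unfolding cylinder_event_def by blast
qed

lemma infsum_pathmass_cylinder_transfers:
  assumes "K + K \<le> L"
  shows "infsum (pathmass \<alpha> \<beta> \<sigma> L) {\<gamma>. motzkin L \<gamma> \<and> cylinder_event K z x L \<gamma>}
       = \<alpha> (z 0) * transfers (restricted_weight \<sigma> (cylinder_constraint K L z x)) L \<beta> (z 0)"
proof -
  have eq: "{\<gamma>. motzkin L \<gamma> \<and> cylinder_event K z x L \<gamma>}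
          = {\<gamma>\<in>motzkin_from L (z 0). cylinder_event K z x L \<gamma>}"
    by (auto simp: motzkin_from_def cylinder_event_def)
  have "infsum (pathmass \<alpha> \<beta> \<sigma> L) {\<gamma>. motzkin L \<gamma> \<and> cylinder_event K z x L \<gamma>}
      = (\<Sum>\<gamma>\<in>motzkin_from L (z 0). if cylinder_event K z x L \<gamma> then pathmass \<alpha> \<beta> \<sigma> L \<gamma> else 0)"
    unfolding eq by (simp add: finite_motzkin_from sum.inter_filter)
  also have "\<dots> = (\<Sum>\<gamma>\<in>motzkin_from L (z 0).
                   \<alpha> (z 0) * (path_weight (restricted_weight \<sigma> (cylinder_constraint K L z x)) L \<gamma> * \<beta> (\<gamma> L)))"
    using assms
    by (intro sum.cong refl)
       (simp add: motzkin_from_def pathmass_eq path_weight_restricted cylinder_event_iff_constraint)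
  also have "\<dots> = \<alpha> (z 0) * transfers (restricted_weight \<sigma> (cylinder_constraint K L z x)) L \<beta> (z 0)"
    by (simp add: sum_motzkin_from flip: sum_distrib_left)
  finally show ?thesis .
qed

lemma transfers_first_segment:
  "transfers (restricted_weight \<sigma> (\<lambda>t i m. i = z (t - 1) \<and> m = z t)) n g (z 0)
     = (\<Prod>t\<in>{1..n}. step_weight \<sigma> (z (t - 1)) (z t)) * g (z n)"
proof (induction n arbitrary: g)
  case 0
  show ?case by simp
next
  case (Suc n)
  have "transfer (restricted_weight \<sigma> (\<lambda>t i m. i = z (t - 1) \<and> m = z t) (Suc n)) g (z n)
      = (\<Sum>m\<in>motzkin_nbrs (z n). if m = z (Suc n) then step_weight \<sigma> (z n) m * g m else 0)"
    unfolding transfer_def restricted_weight_def by (intro sum.cong) auto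
  also have "\<dots> = step_weight \<sigma> (z n) (z (Suc n)) * g (z (Suc n))"
    by (simp add: step_weight_def)
  finally have "transfer (restricted_weight \<sigma> (\<lambda>t i m. i = z (t - 1) \<and> m = z t) (Suc n)) g (z n)
      = step_weight \<sigma> (z n) (z (Suc n)) * g (z (Suc n))" .
  then show ?case
    using Suc.IH by (simp add: prod.cl_ivl_Suc)
qed

definition increment_weight :: "real \<Rightarrow> (nat \<Rightarrow> int) \<Rightarrow> nat \<Rightarrow> nat \<Rightarrow> nat \<Rightarrow> real" where
  "increment_weight \<sigma> y = restricted_weight \<sigma> (\<lambda>t i m. int i - int m = y t)"

definition increment_factor :: "real \<Rightarrow> real \<Rightarrow> int \<Rightarrow> real" where
  "increment_factor \<rho> \<sigma> d = (if d = 1 then 1 / \<rho> else if d = 0 then \<sigma> else if d = -1 then \<rho> else 0)"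

lemma transfer_increment:
  "transfer (increment_weight \<sigma> y s) g i =
     (if \<bar>y s\<bar> \<le> 1 \<and> y s \<le> int i then (if y s = 0 then \<sigma> else 1) * g (nat (int i - y s)) else 0)"
proof (cases "y s \<le> int i")
  case True
  let ?m = "nat (int i - y s)"
  have "transfer (increment_weight \<sigma> y s) g i
      = (\<Sum>m\<in>motzkin_nbrs i. if m = ?m then step_weight \<sigma> i m * g m else 0)"
    unfolding transfer_def increment_weight_def restricted_weight_def
    using True by (intro sum.cong) auto
  also have "\<dots> = (if \<bar>y s\<bar> \<le> 1 then (if y s = 0 then \<sigma> else 1) * g ?m else 0)"
    using True by (auto simp: step_weight_def mem_motzkin_nbrs)
  finally show ?thesis
    using True by simp
next
  case False
  then have "transfer (increment_weight \<sigma> y s) g i = 0"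
    unfolding transfer_def increment_weight_def restricted_weight_def by (intro sum.neutral) auto
  then show ?thesis
    using False by simp
qed

lemma transfer_increment_tail:
  assumes \<rho>: "\<rho> > 0" and tail: "\<And>j. q \<le> j \<Longrightarrow> g j = c * \<rho> ^ j" and j: "q + 1 \<le> j"
  shows "transfer (increment_weight \<sigma> y s) g j
           = c * increment_factor \<rho> \<sigma> (y s) * \<rho> ^ j"
proof -
  obtain j' where j': "j = Suc j'" "q \<le> j'"
    using j by (cases j) auto
  consider "y s = 1" | "y s = 0" | "y s = -1" | "\<bar>y s\<bar> > 1"
    by linarith
  then show ?thesis
  proof cases
    case 1
    then have "nat (int j - y s) = j'"
      using j' by simp
    then show ?thesis
      using 1 j' \<rho> by (simp add: transfer_increment tail increment_factor_def)
  next
    case 2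
    then show ?thesis
      using j by (simp add: transfer_increment tail increment_factor_def)
  next
    case 3
    then have "nat (int j - y s) = Suc j"
      by simp
    then show ?thesis
      using 3 j by (simp add: transfer_increment tail increment_factor_def)
  qed (auto simp: transfer_increment increment_factor_def)
qed

lemma transfer_increment_bound:
  assumes \<rho>: "\<rho> \<ge> 1" and \<sigma>: "\<sigma> \<ge> 0" and bound: "\<And>j. 0 \<le> g j \<and> g j \<le> B * \<rho> ^ j"
  shows "0 \<le> transfer (increment_weight \<sigma> y s) g j \<and>
         transfer (increment_weight \<sigma> y s) g j
           \<le> B * ((\<sigma> + 1) * \<rho>) * \<rho> ^ j"
proof -
  let ?m = "nat (int j - y s)"
  have B: "B \<ge> 0"
    using bound[of 0] by simp
  have "(if y s = 0 then \<sigma> else 1) * g ?m \<le> (\<sigma> + 1) * (B * \<rho> ^ Suc j)"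
    if "\<bar>y s\<bar> \<le> 1"
  proof (intro mult_mono)
    have "\<rho> ^ ?m \<le> \<rho> ^ Suc j"
      using that \<rho> by (intro power_increasing) auto
    then show "g ?m \<le> B * \<rho> ^ Suc j"
      using bound[of ?m] B by (meson mult_left_mono order_trans)
  qed (use \<sigma> bound in auto)
  then show ?thesis
    using \<sigma> bound[of ?m] B \<rho> by (auto simp: transfer_increment algebra_simps)
qed

lemma transfers_increments_tail:
  assumes "\<rho> > 0" and "\<And>j. q \<le> j \<Longrightarrow> g j = c * \<rho> ^ j" and "q + n \<le> j"
  shows "transfers (increment_weight \<sigma> y) n g j
           = c * (\<Prod>t\<in>{1..n}. increment_factor \<rho> \<sigma> (y t)) * \<rho> ^ j"
  using assms(2,3)
proof (induction n arbitrary: g q c)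
  case 0
  then show ?case by simp
next
  case (Suc n)
  let ?g = "transfer (increment_weight \<sigma> y (Suc n)) g"
  have "?g j' = (c * increment_factor \<rho> \<sigma> (y (Suc n))) * \<rho> ^ j'" if "q + 1 \<le> j'" for j'
    using transfer_increment_tail[OF assms(1) Suc.prems(1) that] by simp
  then have "transfers (increment_weight \<sigma> y) n ?g j
      = (c * increment_factor \<rho> \<sigma> (y (Suc n))) * (\<Prod>t\<in>{1..n}. increment_factor \<rho> \<sigma> (y t)) * \<rho> ^ j"
    using Suc.prems(2) by (intro Suc.IH) auto
  then show ?case
    by (simp add: prod.cl_ivl_Suc mult_ac)
qed

lemma transfers_increments_bound:
  assumes "\<rho> \<ge> 1" and "\<sigma> \<ge> 0" and "\<And>j. 0 \<le> g j \<and> g j \<le> B * \<rho> ^ j"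
  shows "0 \<le> transfers (increment_weight \<sigma> y) n g j \<and>
         transfers (increment_weight \<sigma> y) n g j
           \<le> B * ((\<sigma> + 1) * \<rho>) ^ n * \<rho> ^ j"
  using assms(3)
proof (induction n arbitrary: g B j)
  case 0
  then show ?case by simp
next
  case (Suc n)
  let ?g = "transfer (increment_weight \<sigma> y (Suc n)) g"
  have "0 \<le> ?g j' \<and> ?g j' \<le> (B * ((\<sigma> + 1) * \<rho>)) * \<rho> ^ j'" for j'
    using transfer_increment_bound[OF assms(1,2) Suc.prems] by simp
  from Suc.IH[OF this, of j] show ?case
    by (simp add: mult_ac)
qed

lemma transfers_increments_perturbation:
  assumes \<rho>: "\<rho> \<ge> 1" and \<sigma>: "\<sigma> \<ge> 0"
  obtains E where "\<And>j. \<bar>transfers (increment_weight \<sigma> y) K (\<lambda>n. \<rho> ^ n) j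
                        - (\<Prod>t\<in>{1..K}. increment_factor \<rho> \<sigma> (y t)) * \<rho> ^ j\<bar> \<le> E * (if j < K then 1 else 0)"
proof
  let ?g = "transfers (increment_weight \<sigma> y) K (\<lambda>n. \<rho> ^ n)"
    and ?b = "\<Prod>t\<in>{1..K}. increment_factor \<rho> \<sigma> (y t)" and ?B = "((\<sigma> + 1) * \<rho>) ^ K"
  fix j
  show "\<bar>?g j - ?b * \<rho> ^ j\<bar> \<le> ((?B + \<bar>?b\<bar>) * \<rho> ^ K) * (if j < K then 1 else 0)"
  proof (cases "j < K")
    case True
    have "0 \<le> \<rho> ^ i \<and> \<rho> ^ i \<le> 1 * \<rho> ^ i" for i
      using \<rho> by simp
    from transfers_increments_bound[OF \<rho> \<sigma> this]
    have g: "0 \<le> ?g j \<and> ?g j \<le> ?B * \<rho> ^ j"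
      by simp
    have "\<bar>?g j - ?b * \<rho> ^ j\<bar> \<le> \<bar>?g j\<bar> + \<bar>?b * \<rho> ^ j\<bar>"
      by (rule abs_triangle_ineq4)
    also have "\<dots> \<le> ?B * \<rho> ^ j + \<bar>?b\<bar> * \<rho> ^ j"
      using g \<rho> by (simp add: abs_mult)
    also have "\<dots> \<le> (?B + \<bar>?b\<bar>) * \<rho> ^ K"
      using True \<rho> \<sigma> by (simp add: distrib_right[symmetric] mult_left_mono power_increasing)
    finally show ?thesis
      using True by simp
  next
    case False
    then show ?thesis
      using transfers_increments_tail[where g = "\<lambda>n. \<rho> ^ n" and q = 0 and c = 1] \<rho> by simp
  qed
qed

lemma transfers_cylinder_split:
  "transfers (restricted_weight \<sigma> (cylinder_constraint K (K + M + K) z x)) (K + M + K) \<beta> (z 0) =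
     (\<Prod>t\<in>{1..K}. step_weight \<sigma> (z (t - 1)) (z t)) *
     (motzkin_op \<sigma> ^^ M) (transfers (increment_weight \<sigma> (\<lambda>t. x (K + 1 - t))) K \<beta>)
       (z K)"
proof -
  let ?w = "restricted_weight \<sigma> (cylinder_constraint K (K + M + K) z x)"
  have first: "transfers ?w K g = transfers (restricted_weight \<sigma> (\<lambda>t i m. i = z (t - 1) \<and> m = z t)) K g"
    for g
    by (intro transfers_cong ext) (simp add: restricted_weight_def cylinder_constraint_def)
  have middle: "transfers (\<lambda>t. ?w (t + K)) M g = (motzkin_op \<sigma> ^^ M) g" for g
  proof -
    have "transfers (\<lambda>t. ?w (t + K)) M g = transfers (\<lambda>_. step_weight \<sigma>) M g"
      by (intro transfers_cong ext) (simp add: restricted_weight_def cylinder_constraint_def)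
    then show ?thesis
      by (simp add: transfers_step_weight)
  qed
  have last: "transfers (\<lambda>t. ?w (t + M + K)) K \<beta>
      = transfers (increment_weight \<sigma> (\<lambda>t. x (K + 1 - t))) K \<beta>"
  proof (intro transfers_cong ext)
    fix t i m assume t: "t \<in> {1..K}"
    then have "K + M + K + 1 - (t + M + K) = K + 1 - t" "\<not> t + M + K \<le> K"
      by auto
    with t show "?w (t + M + K) i m = increment_weight \<sigma> (\<lambda>t. x (K + 1 - t)) t i m"
      by (simp add: increment_weight_def restricted_weight_def cylinder_constraint_def)
  qed
  have "transfers ?w (K + M + K) \<beta>
      = transfers ?w K (transfers (\<lambda>t. ?w (t + K)) M (transfers (\<lambda>t. ?w (t + M + K)) K \<beta>))"
    using transfers_add[of ?w K "M + K"] transfers_add[of "\<lambda>t. ?w (t + K)" M K]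
    by (simp add: add.assoc)
  also have "\<dots> = transfers (restricted_weight \<sigma> (\<lambda>t i m. i = z (t - 1) \<and> m = z t)) K
                   ((motzkin_op \<sigma> ^^ M) (transfers (increment_weight \<sigma> (\<lambda>t. x (K + 1 - t))) K \<beta>))"
    by (simp only: first middle last)
  finally show ?thesis
    by (simp only: transfers_first_segment)
qed

theorem infsum_pathmass_cylinder:
  "infsum (pathmass \<alpha> \<beta> \<sigma> (K + M + K)) {\<gamma>. motzkin (K + M + K) \<gamma> \<and> cylinder_event K z x (K + M + K) \<gamma>}
     = \<alpha> (z 0) * (\<Prod>t\<in>{1..K}. step_weight \<sigma> (z (t - 1)) (z t)) *
       (motzkin_op \<sigma> ^^ M) (transfers (increment_weight \<sigma> (\<lambda>t. x (K + 1 - t))) K \<beta>)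
         (z K)"
  by (simp add: infsum_pathmass_cylinder_transfers transfers_cylinder_split)

section \<open>The operator \<open>T\<close> and its eigenfunctions\<close>

lemma motzkin_op_add: "motzkin_op \<sigma> (\<lambda>j. f j + g j) i = motzkin_op \<sigma> f i + motzkin_op \<sigma> g i"
  unfolding motzkin_op_def by (simp add: algebra_simps)

lemma motzkin_op_cmult: "motzkin_op \<sigma> (\<lambda>j. c * f j) i = c * motzkin_op \<sigma> f i"
  unfolding motzkin_op_def by (simp add: algebra_simps)

lemma motzkin_op_mono: "\<sigma> \<ge> 0 \<Longrightarrow> (\<And>j. f j \<le> g j) \<Longrightarrow> motzkin_op \<sigma> f i \<le> motzkin_op \<sigma> g i"
  unfolding motzkin_op_def by (intro add_mono mult_left_mono) auto

lemma motzkin_op_pow_add: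
  "(motzkin_op \<sigma> ^^ n) (\<lambda>j. f j + g j) i = (motzkin_op \<sigma> ^^ n) f i + (motzkin_op \<sigma> ^^ n) g i"
proof (induction n arbitrary: i)
  case (Suc n)
  then have "(motzkin_op \<sigma> ^^ n) (\<lambda>j. f j + g j) = (\<lambda>i. (motzkin_op \<sigma> ^^ n) f i + (motzkin_op \<sigma> ^^ n) g i)"
    by auto
  then show ?case
    by (simp add: motzkin_op_add)
qed simp

lemma motzkin_op_pow_cmult: "(motzkin_op \<sigma> ^^ n) (\<lambda>j. c * f j) i = c * (motzkin_op \<sigma> ^^ n) f i"
proof (induction n arbitrary: i)
  case (Suc n)
  then have "(motzkin_op \<sigma> ^^ n) (\<lambda>j. c * f j) = (\<lambda>i. c * (motzkin_op \<sigma> ^^ n) f i)"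
    by auto
  then show ?case
    by (simp add: motzkin_op_cmult)
qed simp

lemma motzkin_op_pow_diff:
  "(motzkin_op \<sigma> ^^ n) (\<lambda>j. f j - g j) i = (motzkin_op \<sigma> ^^ n) f i - (motzkin_op \<sigma> ^^ n) g i"
  using motzkin_op_pow_add[where f = "\<lambda>j. f j - g j" and g = g] by simp

lemma motzkin_op_pow_mono:
  assumes "\<sigma> \<ge> 0" and "\<And>j. f j \<le> g j"
  shows "(motzkin_op \<sigma> ^^ n) f i \<le> (motzkin_op \<sigma> ^^ n) g i"
proof (induction n arbitrary: i)
  case (Suc n)
  then show ?case
    using assms(1) by (simp add: motzkin_op_mono)
qed (simp add: assms(2))

lemma motzkin_op_pow_nonneg: "\<sigma> \<ge> 0 \<Longrightarrow> (\<And>j. f j \<ge> 0) \<Longrightarrow> (motzkin_op \<sigma> ^^ n) f i \<ge> 0"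
  using motzkin_op_pow_mono[where f = "\<lambda>_. 0" and g = f] motzkin_op_pow_cmult[where c = 0 and f = f]
  by simp

lemma motzkin_op_pow_abs_le:
  assumes \<sigma>: "\<sigma> \<ge> 0" and fg: "\<And>j. \<bar>f j\<bar> \<le> g j"
  shows "\<bar>(motzkin_op \<sigma> ^^ n) f i\<bar> \<le> (motzkin_op \<sigma> ^^ n) g i"
proof -
  have "f j \<le> g j" "- 1 * g j \<le> f j" for j
    using fg[of j] by (simp_all add: abs_le_iff)
  then have "(motzkin_op \<sigma> ^^ n) f i \<le> (motzkin_op \<sigma> ^^ n) g i"
    "(motzkin_op \<sigma> ^^ n) (\<lambda>j. - 1 * g j) i \<le> (motzkin_op \<sigma> ^^ n) f i"
    by (simp_all only: motzkin_op_pow_mono[OF \<sigma>])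
  then show ?thesis
    unfolding motzkin_op_pow_cmult by (simp add: abs_le_iff)
qed

lemma motzkin_op_pos: "\<sigma> > 0 \<Longrightarrow> (\<And>j. f j > 0) \<Longrightarrow> motzkin_op \<sigma> f i > 0"
  unfolding motzkin_op_def by (simp add: add_nonneg_pos add_pos_nonneg less_imp_le)

lemma motzkin_op_pow_pos: "\<sigma> > 0 \<Longrightarrow> (\<And>j. f j > 0) \<Longrightarrow> (motzkin_op \<sigma> ^^ n) f i > 0"
  by (induction n arbitrary: i) (simp_all add: motzkin_op_pos)

lemma motzkin_op_pow_eigen:
  assumes "\<And>i. motzkin_op \<sigma> f i = c * f i"
  shows "(motzkin_op \<sigma> ^^ n) f i = c ^ n * f i"
proof (induction n arbitrary: i)
  case (Suc n)
  then have "(motzkin_op \<sigma> ^^ n) f = (\<lambda>i. c ^ n * f i)"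
    by auto
  then show ?case
    by (simp add: motzkin_op_cmult assms)
qed simp

lemma motzkin_op_pow_le_eigen:
  assumes \<sigma>: "\<sigma> \<ge> 0" and c: "c \<ge> 0" and sub: "\<And>i. motzkin_op \<sigma> f i \<le> c * f i"
  shows "(motzkin_op \<sigma> ^^ n) f i \<le> c ^ n * f i"
proof (induction n arbitrary: i)
  case (Suc n)
  have "(motzkin_op \<sigma> ^^ Suc n) f i \<le> motzkin_op \<sigma> (\<lambda>j. c ^ n * f j) i"
    using Suc by (simp add: motzkin_op_mono[OF \<sigma>])
  also have "\<dots> = c ^ n * motzkin_op \<sigma> f i"
    by (rule motzkin_op_cmult)
  also have "\<dots> \<le> c ^ n * (c * f i)"
    using sub c by (simp add: mult_left_mono)
  finally show ?case
    by (simp add: mult_ac)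
qed simp

lemma diff_inverse_neq_0:
  fixes \<rho> :: real
  assumes "\<rho> > 0" and "\<rho> \<noteq> 1"
  shows "\<rho> - inverse \<rho> \<noteq> 0"
proof
  assume "\<rho> - inverse \<rho> = 0"
  then have "\<rho> ^ 2 = 1"
    using assms by (simp add: field_simps power2_eq_square)
  then show False
    using assms by (simp add: power2_eq_1_iff)
qed

text \<open>Both \<open>\<rho> ^ n\<close> and \<open>\<rho> ^ (- n)\<close> solve the recurrence \<open>u (n - 1) + u (n + 1) = (\<rho> + 1/\<rho>) * u n\<close>;
  \<open>hfun \<rho>\<close> is the combination of them that also satisfies the boundary condition at \<open>0\<close>.\<close>

lemma hfun_recurrence:
  assumes \<rho>: "\<rho> > 0"
  shows "hfun \<rho> j + hfun \<rho> (j + 2) = (\<rho> + 1 / \<rho>) * hfun \<rho> (j + 1)"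
proof (cases "\<rho> = 1")
  case False
  let ?q = "inverse \<rho>"
  have h: "hfun \<rho> n = (\<rho> ^ (n + 1) - ?q ^ (n + 1)) / (\<rho> - ?q)" for n
    using False by (simp add: hfun_def)
  have rec: "\<rho> ^ k + \<rho> ^ (k + 2) = (\<rho> + 1 / \<rho>) * \<rho> ^ (k + 1)"
    "?q ^ k + ?q ^ (k + 2) = (\<rho> + 1 / \<rho>) * ?q ^ (k + 1)" for k
    using \<rho> by (simp_all add: field_simps power_add)
  have "hfun \<rho> j + hfun \<rho> (j + 2)
      = ((\<rho> ^ (j + 1) + \<rho> ^ (j + 1 + 2)) - (?q ^ (j + 1) + ?q ^ (j + 1 + 2))) / (\<rho> - ?q)"
    unfolding h by (simp add: diff_divide_distrib add_divide_distrib algebra_simps)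
  also have "\<dots> = (\<rho> + 1 / \<rho>) * hfun \<rho> (j + 1)"
    unfolding rec h by (simp add: algebra_simps)
  finally show ?thesis .
qed (simp add: hfun_def)

lemma hfun_0:
  assumes "\<rho> > 0"
  shows "hfun \<rho> 0 = 1"
  using diff_inverse_neq_0[OF assms] by (cases "\<rho> = 1") (simp_all add: hfun_def)

lemma hfun_1:
  assumes "\<rho> > 0"
  shows "hfun \<rho> 1 = \<rho> + 1 / \<rho>"
proof (cases "\<rho> = 1")
  case False
  have "\<rho> * \<rho> - inverse \<rho> * inverse \<rho> = (\<rho> + 1 / \<rho>) * (\<rho> - inverse \<rho>)"
    by (simp add: algebra_simps divide_inverse)
  then show ?thesis
    using False diff_inverse_neq_0[OF assms False] by (simp add: hfun_def)
qed (simp add: hfun_def)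

lemma motzkin_op_hfun:
  assumes \<rho>: "\<rho> > 0"
  shows "motzkin_op \<sigma> (hfun \<rho>) i = (\<rho> + 1 / \<rho> + \<sigma>) * hfun \<rho> i"
proof (cases i)
  case 0
  then have "motzkin_op \<sigma> (hfun \<rho>) i = \<sigma> * hfun \<rho> 0 + hfun \<rho> 1"
    by (simp add: motzkin_op_def)
  then show ?thesis
    using 0 hfun_0[OF \<rho>] hfun_1[OF \<rho>] by simp
next
  case (Suc j)
  then show ?thesis
    using hfun_recurrence[OF \<rho>, of j] by (simp add: motzkin_op_def algebra_simps)
qed

lemma motzkin_op_pow_hfun:
  "\<rho> > 0 \<Longrightarrow> (motzkin_op \<sigma> ^^ n) (hfun \<rho>) i = (\<rho> + 1 / \<rho> + \<sigma>) ^ n * hfun \<rho> i"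
  by (intro motzkin_op_pow_eigen motzkin_op_hfun)

lemma motzkin_op_pow_succ:
  "(motzkin_op \<sigma> ^^ n) (\<lambda>j. real j + 1) i = (2 + \<sigma>) ^ n * (real i + 1)"
proof -
  have "hfun 1 = (\<lambda>j. real j + 1)"
    by (simp add: fun_eq_iff hfun_def)
  then show ?thesis
    using motzkin_op_pow_hfun[where \<rho> = 1] by simp
qed

lemma hfun_pos:
  assumes \<rho>: "\<rho> \<ge> 1"
  shows "hfun \<rho> n > 0"
proof (cases "\<rho> = 1")
  case False
  then have "\<rho> > 1"
    using \<rho> by simp
  then have q: "0 < inverse \<rho>" "inverse \<rho> < 1"
    by (auto simp: inverse_less_1_iff)
  have "inverse \<rho> ^ Suc n < 1" "1 < \<rho> ^ Suc n" "inverse \<rho> < \<rho>"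
    using power_Suc_less_one[OF q] one_less_power[OF \<open>\<rho> > 1\<close>, of "Suc n"] q \<open>\<rho> > 1\<close> by auto
  then show ?thesis
    using False by (simp add: hfun_def)
qed (simp add: hfun_def)

lemma power_eq_hfun_plus:
  assumes "\<rho> > 1"
  shows "\<rho> ^ n = (\<rho> - inverse \<rho>) / \<rho> * hfun \<rho> n + 1 / \<rho> * inverse \<rho> ^ (n + 1)"
proof -
  have "inverse \<rho> < \<rho>"
    using assms by (meson inverse_less_1_iff less_trans zero_less_one)
  then have "(\<rho> - inverse \<rho>) / \<rho> * hfun \<rho> n = (\<rho> ^ (n + 1) - inverse \<rho> ^ (n + 1)) / \<rho>"
    using assms by (simp add: hfun_def)
  also have "\<dots> = \<rho> ^ n - 1 / \<rho> * inverse \<rho> ^ (n + 1)"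
    using assms by (simp add: diff_divide_distrib)
  finally show ?thesis
    by simp
qed

lemma motzkin_op_pow_le_succ:
  assumes \<sigma>: "\<sigma> \<ge> 0" and f: "\<And>j. f j \<le> 1"
  shows "(motzkin_op \<sigma> ^^ n) f a \<le> (2 + \<sigma>) ^ n * (real a + 1)"
proof -
  have "f j \<le> real j + 1" for j
    using f[of j] by linarith
  then have "(motzkin_op \<sigma> ^^ n) f a \<le> (motzkin_op \<sigma> ^^ n) (\<lambda>j. real j + 1) a"
    by (intro motzkin_op_pow_mono[OF \<sigma>])
  then show ?thesis
    by (simp add: motzkin_op_pow_succ)
qed

lemma motzkin_op_pow_power_eq:
  assumes "\<rho> > 1"
  shows "(motzkin_op \<sigma> ^^ n) (\<lambda>j. \<rho> ^ j) a
           = (\<rho> - inverse \<rho>) / \<rho> * ((\<rho> + 1 / \<rho> + \<sigma>) ^ n * hfun \<rho> a)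
             + 1 / \<rho> * (motzkin_op \<sigma> ^^ n) (\<lambda>j. inverse \<rho> ^ (j + 1)) a"
  using assms by (simp only: power_eq_hfun_plus[OF assms] motzkin_op_pow_add motzkin_op_pow_cmult
                             motzkin_op_pow_hfun)

lemma tendsto_div_power_zero:
  fixes f :: "nat \<Rightarrow> real"
  assumes "0 < q" "q < l" and "\<And>n. 0 \<le> f n" and "\<And>n. f n \<le> q ^ n * B"
  shows "(\<lambda>n. f n / l ^ n) \<longlonglongrightarrow> 0"
proof (rule tendsto_sandwich[OF _ _ tendsto_const])
  have "(\<lambda>n. (q / l) ^ n * B) \<longlonglongrightarrow> 0 * B"
    using assms(1,2) by (intro tendsto_mult LIMSEQ_power_zero) auto
  then show "(\<lambda>n. q ^ n * B / l ^ n) \<longlonglongrightarrow> 0"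
    by (simp add: power_divide field_simps)
  show "\<forall>\<^sub>F n in sequentially. 0 \<le> f n / l ^ n"
    using assms by (intro always_eventually allI divide_nonneg_pos) auto
  show "\<forall>\<^sub>F n in sequentially. f n / l ^ n \<le> q ^ n * B / l ^ n"
    using assms by (intro always_eventually allI divide_right_mono) auto
qed

lemma succ_growth_less:
  fixes \<rho> \<sigma> :: real
  assumes \<rho>: "\<rho> > 1"
  shows "2 + \<sigma> < \<rho> + 1 / \<rho> + \<sigma>"
proof -
  have "0 < (\<rho> - 1) ^ 2"
    using \<rho> by simp
  then have "2 < \<rho> + 1 / \<rho>"
    using \<rho> by (simp add: power2_eq_square field_simps)
  then show ?thesis
    by simp
qed

lemma motzkin_op_pow_bounded_scaling:
  assumes \<sigma>: "\<sigma> \<ge> 0" and \<rho>: "\<rho> > 1" and f: "\<And>j. 0 \<le> f j" "\<And>j. f j \<le> 1"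
  shows "(\<lambda>L. (motzkin_op \<sigma> ^^ L) f a / (\<rho> + 1 / \<rho> + \<sigma>) ^ L) \<longlonglongrightarrow> 0"
proof (rule tendsto_div_power_zero)
  show "0 < 2 + \<sigma>" "2 + \<sigma> < \<rho> + 1 / \<rho> + \<sigma>"
    using \<sigma> succ_growth_less[OF \<rho>] by simp_all
  show "0 \<le> (motzkin_op \<sigma> ^^ L) f a" for L
    using \<sigma> f by (intro motzkin_op_pow_nonneg) auto
  show "(motzkin_op \<sigma> ^^ L) f a \<le> (2 + \<sigma>) ^ L * (real a + 1)" for L
    using \<sigma> f by (intro motzkin_op_pow_le_succ) auto
qed

text \<open>For \<open>\<rho> > 1\<close>, \<open>\<lambda>j. \<rho> ^ j\<close> is a multiple of the eigenfunction \<open>hfun \<rho>\<close> (eigenvalue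
  \<open>\<rho> + 1/\<rho> + \<sigma>\<close>) plus a bounded function, whose image under \<open>T^L\<close> grows at most like the
  smaller eigenvalue \<open>2 + \<sigma>\<close> of \<open>n \<mapsto> n + 1\<close>.\<close>

lemma motzkin_op_pow_power_scaling:
  assumes \<sigma>: "\<sigma> \<ge> 0" and \<rho>: "\<rho> > 1"
  shows "(\<lambda>L. (motzkin_op \<sigma> ^^ L) (\<lambda>j. \<rho> ^ j) a / (\<rho> + 1 / \<rho> + \<sigma>) ^ L) \<longlonglongrightarrow> (\<rho> - inverse \<rho>) / \<rho> * hfun \<rho> a"
proof -
  let ?l = "\<rho> + 1 / \<rho> + \<sigma>" and ?r = "\<lambda>L. (motzkin_op \<sigma> ^^ L) (\<lambda>j. inverse \<rho> ^ (j + 1)) a"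
  have "?l > 0"
    using succ_growth_less[OF \<rho>, of \<sigma>] \<sigma> by simp
  then have eq: "(motzkin_op \<sigma> ^^ L) (\<lambda>j. \<rho> ^ j) a / ?l ^ L
      = (\<rho> - inverse \<rho>) / \<rho> * hfun \<rho> a + 1 / \<rho> * (?r L / ?l ^ L)" for L
    by (simp add: motzkin_op_pow_power_eq[OF \<rho>] field_simps)
  have "inverse \<rho> ^ (j + 1) \<ge> 0" "inverse \<rho> ^ (j + 1) \<le> 1" for j
    using \<rho> by (simp, intro power_le_one) (auto simp: inverse_le_1_iff)
  then have "(\<lambda>L. ?r L / ?l ^ L) \<longlonglongrightarrow> 0"
    by (intro motzkin_op_pow_bounded_scaling[OF \<sigma> \<rho>])
  then have "(\<lambda>L. (\<rho> - inverse \<rho>) / \<rho> * hfun \<rho> a + 1 / \<rho> * (?r L / ?l ^ L))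
      \<longlonglongrightarrow> (\<rho> - inverse \<rho>) / \<rho> * hfun \<rho> a + 1 / \<rho> * 0"
    by (intro tendsto_intros)
  then show ?thesis
    unfolding eq by simp
qed

lemma motzkin_op_pow_power_le:
  assumes \<sigma>: "\<sigma> \<ge> 0" and \<rho>: "\<rho> \<ge> 1"
  shows "(motzkin_op \<sigma> ^^ n) (\<lambda>j. \<rho> ^ j) a \<le> (\<rho> + 1 / \<rho> + \<sigma>) ^ n * \<rho> ^ a"
proof (rule motzkin_op_pow_le_eigen[OF \<sigma>])
  show "\<rho> + 1 / \<rho> + \<sigma> \<ge> 0"
    using \<sigma> \<rho> by simp
  show "motzkin_op \<sigma> (\<lambda>j. \<rho> ^ j) i \<le> (\<rho> + 1 / \<rho> + \<sigma>) * \<rho> ^ i" for i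
    using \<sigma> \<rho> by (cases i) (simp_all add: motzkin_op_def field_simps)
qed

section \<open>Weighted free walks on \<open>\<int>\<close>\<close>

text \<open>\<open>free_walks \<sigma> n d\<close> is the weighted number of walks on \<open>\<int>\<close> of length \<open>n\<close> from \<open>0\<close> to \<open>d\<close> with
  steps \<open>\<plusminus>1\<close> of weight \<open>1\<close> and steps \<open>0\<close> of weight \<open>\<sigma>\<close>, i.e. the coefficient of \<open>X ^ d\<close> in
  \<open>(X + \<sigma> + 1/X) ^ n\<close>.\<close>

fun free_walks :: "real \<Rightarrow> nat \<Rightarrow> int \<Rightarrow> real" where
  "free_walks \<sigma> 0 d = (if d = 0 then 1 else 0)"
| "free_walks \<sigma> (Suc n) d = free_walks \<sigma> n (d - 1) + \<sigma> * free_walks \<sigma> n d + free_walks \<sigma> n (d + 1)"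

lemma free_walks_nonneg: "\<sigma> \<ge> 0 \<Longrightarrow> free_walks \<sigma> n d \<ge> 0"
  by (induction n arbitrary: d) auto

lemma free_walks_eq_0: "int n < \<bar>d\<bar> \<Longrightarrow> free_walks \<sigma> n d = 0"
  by (induction n arbitrary: d) auto

lemma free_walks_minus: "free_walks \<sigma> n (- d) = free_walks \<sigma> n d"
proof (induction n arbitrary: d)
  case (Suc n)
  then show ?case
    using Suc[of "d + 1"] Suc[of "d - 1"] by simp
qed simp

lemma free_walks_pos: "\<sigma> > 0 \<Longrightarrow> \<bar>d\<bar> \<le> int n \<Longrightarrow> free_walks \<sigma> n d > 0"
proof (induction n arbitrary: d)
  case (Suc n)
  have nonneg: "free_walks \<sigma> n e \<ge> 0" for e
    using Suc.prems free_walks_nonneg by simp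
  consider "\<bar>d\<bar> \<le> int n" | "d = int n + 1" | "d = - int n - 1"
    using Suc.prems by linarith
  then show ?case
  proof cases
    case 1
    then have "\<sigma> * free_walks \<sigma> n d > 0"
      using Suc by simp
    then show ?thesis
      using nonneg[of "d - 1"] nonneg[of "d + 1"] by simp
  next
    case 2
    then have "free_walks \<sigma> n (d - 1) > 0"
      using Suc by simp
    then show ?thesis
      using nonneg[of d] nonneg[of "d + 1"] Suc.prems by (simp add: add_pos_nonneg)
  next
    case 3
    then have "free_walks \<sigma> n (d + 1) > 0"
      using Suc by simp
    then show ?thesis
      using nonneg[of d] nonneg[of "d - 1"] Suc.prems by (simp add: add_nonneg_pos)
  qed
qed simp

lemma sum_free_walks: "(\<Sum>d\<in>{- int n..int n}. free_walks \<sigma> n d) = (2 + \<sigma>) ^ n"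
proof (induction n)
  case (Suc n)
  have shift: "(\<Sum>d\<in>{- int (Suc n)..int (Suc n)}. free_walks \<sigma> n (d + c)) = (2 + \<sigma>) ^ n"
    if "\<bar>c\<bar> \<le> 1" for c
  proof -
    have "(\<Sum>d\<in>{- int (Suc n)..int (Suc n)}. free_walks \<sigma> n (d + c))
        = sum (free_walks \<sigma> n) ((\<lambda>d. d + c) ` {- int (Suc n)..int (Suc n)})"
      by (subst sum.reindex) (auto simp: inj_on_def)
    also have "\<dots> = (\<Sum>d\<in>{- int n..int n}. free_walks \<sigma> n d)"
      unfolding image_add_atLeastAtMost'
      using that by (intro sum.mono_neutral_right) (auto simp: free_walks_eq_0)
    finally show ?thesis
      using Suc.IH by simp
  qed
  have "(\<Sum>d\<in>{- int (Suc n)..int (Suc n)}. free_walks \<sigma> (Suc n) d)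
      = (\<Sum>d\<in>{- int (Suc n)..int (Suc n)}. free_walks \<sigma> n (d + - 1))
        + \<sigma> * (\<Sum>d\<in>{- int (Suc n)..int (Suc n)}. free_walks \<sigma> n (d + 0))
        + (\<Sum>d\<in>{- int (Suc n)..int (Suc n)}. free_walks \<sigma> n (d + 1))"
    by (simp add: sum.distrib sum_distrib_left)
  also have "\<dots> = (2 + \<sigma>) ^ Suc n"
    by (simp only: shift) (simp add: algebra_simps)
  finally show ?case .
qed simp

lemma free_walks_le:
  assumes "\<sigma> \<ge> 0"
  shows "free_walks \<sigma> n d \<le> (2 + \<sigma>) ^ n"
proof (cases "\<bar>d\<bar> \<le> int n")
  case True
  then have "free_walks \<sigma> n d \<le> (\<Sum>e\<in>{- int n..int n}. free_walks \<sigma> n e)"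
    using assms by (intro member_le_sum) (auto simp: free_walks_nonneg)
  then show ?thesis
    by (simp add: sum_free_walks)
next
  case False
  then show ?thesis
    using assms by (simp add: free_walks_eq_0)
qed

lemma free_walks_add:
  "free_walks \<sigma> (a + b) d = (\<Sum>j\<in>{- int a..int a}. free_walks \<sigma> a j * free_walks \<sigma> b (d - j))"
proof (induction b arbitrary: d)
  case 0
  have "(\<Sum>j\<in>{- int a..int a}. free_walks \<sigma> a j * free_walks \<sigma> 0 (d - j))
      = (\<Sum>j\<in>{- int a..int a}. if j = d then free_walks \<sigma> a j else 0)"
    by (intro sum.cong) auto
  also have "\<dots> = free_walks \<sigma> a d"
    by (auto simp: free_walks_eq_0)
  finally show ?case
    by simp
next
  case (Suc b)
  show ?case
    by (simp add: Suc.IH sum.distrib sum_distrib_left algebra_simps)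
qed

lemma free_walks_add_0:
  "free_walks \<sigma> (a + b) 0 = (\<Sum>j\<in>{- int a..int a}. free_walks \<sigma> a j * free_walks \<sigma> b j)"
  using free_walks_add[of \<sigma> a b 0] free_walks_minus[of \<sigma> b] by simp

text \<open>By the convolution identity and \<open>u v \<le> (u\<^sup>2 + v\<^sup>2)/2\<close>, a walk of even length is most likely
  to return to its starting point.\<close>

lemma free_walks_even_le_0:
  assumes "\<sigma> \<ge> 0"
  shows "free_walks \<sigma> (M + M) d \<le> free_walks \<sigma> (M + M) 0"
proof -
  let ?u = "free_walks \<sigma> M" and ?I = "{- int M..int M}"
  have "free_walks \<sigma> (M + M) d = (\<Sum>j\<in>?I. ?u j * ?u (d - j))"
    by (rule free_walks_add)
  also have "\<dots> \<le> (\<Sum>j\<in>?I. (?u j ^ 2 + ?u (d - j) ^ 2) / 2)"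
  proof (intro sum_mono)
    show "?u j * ?u (d - j) \<le> (?u j ^ 2 + ?u (d - j) ^ 2) / 2" for j
      using sum_squares_bound[of "?u j" "?u (d - j)"] by (simp add: power2_eq_square)
  qed
  also have "\<dots> = (\<Sum>j\<in>?I. ?u j ^ 2) / 2 + (\<Sum>j\<in>?I. ?u (d - j) ^ 2) / 2"
    by (simp add: sum.distrib add_divide_distrib sum_divide_distrib)
  also have "(\<Sum>j\<in>?I. ?u (d - j) ^ 2) \<le> (\<Sum>j\<in>?I. ?u j ^ 2)"
  proof -
    have "(\<Sum>j\<in>?I. ?u (d - j) ^ 2) = (\<Sum>j\<in>(\<lambda>j. d - j) ` ?I. ?u j ^ 2)"
      by (subst sum.reindex) (auto simp: inj_on_def)
    also have "\<dots> = (\<Sum>j\<in>(\<lambda>j. d - j) ` ?I \<inter> ?I. ?u j ^ 2)"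
      by (intro sum.mono_neutral_right) (auto simp: free_walks_eq_0)
    also have "\<dots> \<le> (\<Sum>j\<in>?I. ?u j ^ 2)"
      by (intro sum_mono2) auto
    finally show ?thesis .
  qed
  also have "(\<Sum>j\<in>?I. ?u j ^ 2) = free_walks \<sigma> (M + M) 0"
    by (simp add: free_walks_add_0 power2_eq_square)
  finally show ?thesis
    by simp
qed

declare free_walks.simps(2) [simp del]

lemma free_walks_log_convex:
  assumes "\<sigma> \<ge> 0"
  shows "free_walks \<sigma> (M + M + 2) 0 ^ 2 \<le> free_walks \<sigma> (M + M) 0 * free_walks \<sigma> (M + M + 4) 0"
proof -
  let ?I = "{- int M..int M}"
  have "free_walks \<sigma> (M + M + 2) 0 = (\<Sum>j\<in>?I. free_walks \<sigma> M j * free_walks \<sigma> (M + 2) j)"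
    using free_walks_add_0[of \<sigma> M "M + 2"] by (simp add: add.assoc)
  then have "free_walks \<sigma> (M + M + 2) 0 ^ 2
      \<le> (\<Sum>j\<in>?I. free_walks \<sigma> M j ^ 2) * (\<Sum>j\<in>?I. free_walks \<sigma> (M + 2) j ^ 2)"
    by (metis Cauchy_Schwarz_ineq_sum)
  also have "\<dots> \<le> free_walks \<sigma> (M + M) 0 * (\<Sum>j\<in>{- int (M + 2)..int (M + 2)}. free_walks \<sigma> (M + 2) j ^ 2)"
  proof (intro mult_mono sum_mono2)
    show "(\<Sum>j\<in>?I. free_walks \<sigma> M j ^ 2) \<le> free_walks \<sigma> (M + M) 0"
      by (simp add: free_walks_add_0 power2_eq_square)
    show "0 \<le> free_walks \<sigma> (M + M) 0"
      using assms by (rule free_walks_nonneg)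
  qed (auto intro: sum_nonneg)
  also have "(\<Sum>j\<in>{- int (M + 2)..int (M + 2)}. free_walks \<sigma> (M + 2) j ^ 2) = free_walks \<sigma> (M + M + 4) 0"
  proof -
    have e: "M + 2 + (M + 2) = M + M + 4"
      by simp
    show ?thesis
      using free_walks_add_0[of \<sigma> "M + 2" "M + 2"] unfolding e power2_eq_square by (rule sym)
  qed
  finally show ?thesis .
qed

lemma free_walks_even_deficit:
  assumes \<sigma>: "\<sigma> \<ge> 0" and d: "\<bar>d\<bar> \<le> int (k + k)"
  shows "free_walks \<sigma> (k + k) d * (free_walks \<sigma> (M + M) 0 - free_walks \<sigma> (M + M) d)
           \<le> (2 + \<sigma>) ^ (k + k) * free_walks \<sigma> (M + M) 0 - free_walks \<sigma> (k + k + (M + M)) 0"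
proof -
  let ?I = "{- int (k + k)..int (k + k)}"
  have "free_walks \<sigma> (k + k) d * (free_walks \<sigma> (M + M) 0 - free_walks \<sigma> (M + M) d)
      \<le> (\<Sum>j\<in>?I. free_walks \<sigma> (k + k) j * (free_walks \<sigma> (M + M) 0 - free_walks \<sigma> (M + M) j))"
    using d \<sigma> free_walks_even_le_0[OF \<sigma>, of M]
    by (intro member_le_sum[where f = "\<lambda>j. free_walks \<sigma> (k + k) j * (free_walks \<sigma> (M + M) 0 - free_walks \<sigma> (M + M) j)"])
       (auto intro!: mult_nonneg_nonneg free_walks_nonneg)
  also have "\<dots> = free_walks \<sigma> (M + M) 0 * (\<Sum>j\<in>?I. free_walks \<sigma> (k + k) j)
                  - (\<Sum>j\<in>?I. free_walks \<sigma> (k + k) j * free_walks \<sigma> (M + M) j)"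
    by (simp add: algebra_simps sum_subtractf sum_distrib_left)
  also have "\<dots> = (2 + \<sigma>) ^ (k + k) * free_walks \<sigma> (M + M) 0 - free_walks \<sigma> (k + k + (M + M)) 0"
    using sum_free_walks[of \<sigma> "k + k"] free_walks_add_0[of \<sigma> "k + k" "M + M"] by (simp add: mult.commute)
  finally show ?thesis .
qed

lemma tendsto_even_odd:
  fixes f :: "nat \<Rightarrow> real"
  assumes even: "(\<lambda>M. f (M + M)) \<longlonglongrightarrow> l" and odd: "(\<lambda>M. f (Suc (M + M))) \<longlonglongrightarrow> l"
  shows "f \<longlonglongrightarrow> l"
proof (rule LIMSEQ_I)
  fix r :: real assume r: "r > 0"
  obtain n1 where n1: "\<And>n. n \<ge> n1 \<Longrightarrow> norm (f (n + n) - l) < r"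
    using LIMSEQ_D[OF even r] by blast
  obtain n2 where n2: "\<And>n. n \<ge> n2 \<Longrightarrow> norm (f (Suc (n + n)) - l) < r"
    using LIMSEQ_D[OF odd r] by blast
  have "norm (f n - l) < r" if "n \<ge> 2 * (n1 + n2)" for n
  proof (cases "even n")
    case True
    then have "n = n div 2 + n div 2"
      by auto
    then show ?thesis
      using n1[of "n div 2"] that by (metis add_leD1 div_le_mono nonzero_mult_div_cancel_left zero_neq_numeral)
  next
    case False
    then have "n = Suc (n div 2 + n div 2)"
      by presburger
    then show ?thesis
      using n2[of "n div 2"] that by (metis add_leD2 div_le_mono nonzero_mult_div_cancel_left zero_neq_numeral)
  qed
  then show "\<exists>no. \<forall>n\<ge>no. norm (f n - l) < r"
    by blast
qed

context
  fixes \<sigma> :: real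
  assumes \<sigma>: "\<sigma> > 0"
begin

definition return_prob :: "nat \<Rightarrow> real" where
  "return_prob M = free_walks \<sigma> (M + M) 0 / (2 + \<sigma>) ^ (M + M)"

definition return_ratio :: "nat \<Rightarrow> real" where
  "return_ratio M = return_prob (Suc M) / return_prob M"

lemma free_walks_0_pos: "free_walks \<sigma> n 0 > 0"
  using free_walks_pos[OF \<sigma>, of 0 n] by simp

lemma return_prob_pos: "return_prob M > 0"
  unfolding return_prob_def using free_walks_0_pos \<sigma> by simp

lemma return_prob_le_1: "return_prob M \<le> 1"
  unfolding return_prob_def using free_walks_le[of \<sigma> "M + M" 0] \<sigma> by simp

text \<open>Cauchy-Schwarz against the total mass \<open>(2 + \<sigma>) ^ M\<close> of the \<open>2 M + 1\<close> endpoints.\<close>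

lemma return_prob_ge: "return_prob M \<ge> 1 / (2 * real M + 1)"
proof -
  let ?I = "{- int M..int M}"
  have "((2 + \<sigma>) ^ M) ^ 2 \<le> (\<Sum>j\<in>?I. free_walks \<sigma> M j ^ 2) * real (card ?I)"
    using Cauchy_Schwarz_ineq_sum[of "free_walks \<sigma> M" "\<lambda>_. 1" ?I] by (simp add: sum_free_walks)
  then have "(2 + \<sigma>) ^ (M + M) \<le> free_walks \<sigma> (M + M) 0 * (2 * real M + 1)"
    by (simp add: free_walks_add_0 power2_eq_square power_add add.commute)
  then show ?thesis
    unfolding return_prob_def using \<sigma> by (simp add: field_simps)
qed

lemma return_prob_log_convex: "return_prob (Suc M) ^ 2 \<le> return_prob M * return_prob (Suc (Suc M))"
proof -
  have e: "Suc M + Suc M = M + M + 2" "Suc (Suc M) + Suc (Suc M) = M + M + 4"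
    "(M + M + 2) * 2 = (M + M) + (M + M + 4)"
    by simp_all
  have "((2 + \<sigma>) ^ (M + M + 2)) ^ 2 = (2 + \<sigma>) ^ (M + M) * (2 + \<sigma>) ^ (M + M + 4)"
    by (simp only: power_mult[symmetric] power_add[symmetric] e(3))
  then have "return_prob (Suc M) ^ 2
      = free_walks \<sigma> (M + M + 2) 0 ^ 2 / ((2 + \<sigma>) ^ (M + M) * (2 + \<sigma>) ^ (M + M + 4))"
    unfolding return_prob_def e(1) power_divide by simp
  also have "\<dots> \<le> free_walks \<sigma> (M + M) 0 * free_walks \<sigma> (M + M + 4) 0
                  / ((2 + \<sigma>) ^ (M + M) * (2 + \<sigma>) ^ (M + M + 4))"
    using free_walks_log_convex \<sigma> by (intro divide_right_mono) auto
  also have "\<dots> = return_prob M * return_prob (Suc (Suc M))"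
    unfolding return_prob_def e(2) by simp
  finally show ?thesis .
qed

lemma return_ratio_pos: "return_ratio M > 0"
  unfolding return_ratio_def using return_prob_pos by simp

lemma incseq_return_ratio: "incseq return_ratio"
proof (rule incseq_SucI)
  fix M
  have "return_prob (Suc M) * return_prob (Suc M) \<le> return_prob M * return_prob (Suc (Suc M))"
    using return_prob_log_convex by (simp add: power2_eq_square)
  then show "return_ratio M \<le> return_ratio (Suc M)"
    unfolding return_ratio_def using return_prob_pos[of M] return_prob_pos[of "Suc M"]
    by (simp add: divide_simps mult.commute)
qed

lemma return_prob_ge_power: "return_prob (M + n) \<ge> return_prob M * return_ratio M ^ n"
proof (induction n)
  case (Suc n)
  have "return_prob (M + Suc n) = return_ratio (M + n) * return_prob (M + n)"
    unfolding return_ratio_def using return_prob_pos[of "M + n"] by simp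
  also have "\<dots> \<ge> return_ratio M * (return_prob M * return_ratio M ^ n)"
    using incseq_return_ratio[THEN incseqD, of M "M + n"] Suc return_ratio_pos return_prob_pos
    by (intro mult_mono) (auto intro: less_imp_le)
  finally show ?case
    by (simp add: mult_ac)
qed simp

lemma return_ratio_le_1: "return_ratio M \<le> 1"
proof (rule ccontr)
  assume "\<not> return_ratio M \<le> 1"
  then obtain n where "1 / return_prob M < return_ratio M ^ n"
    using real_arch_pow by fastforce
  then have "return_prob M * return_ratio M ^ n > 1"
    using return_prob_pos[of M] by (simp add: field_simps)
  then show False
    using return_prob_ge_power[of M n] return_prob_le_1[of "M + n"] by simp
qed

lemma return_prob_le_power: "(\<And>i. return_ratio i \<le> q) \<Longrightarrow> return_prob M \<le> return_prob 0 * q ^ M"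
proof (induction M)
  case (Suc M)
  have q: "q \<ge> 0"
    using Suc.prems[of 0] return_ratio_pos[of 0] by linarith
  have "return_prob (Suc M) = return_ratio M * return_prob M"
    unfolding return_ratio_def using return_prob_pos[of M] by simp
  also have "\<dots> \<le> q * (return_prob 0 * q ^ M)"
    using Suc return_prob_pos q by (intro mult_mono) (auto intro: less_imp_le)
  finally show ?case
    by (simp add: mult_ac)
qed simp

text \<open>The limit \<open>s\<close> of the increasing ratios must be \<open>1\<close>: otherwise \<open>return_prob M \<le> C s ^ M\<close>
  would contradict the polynomial lower bound \<open>return_prob_ge\<close>.\<close>

lemma return_ratio_tendsto_1: "return_ratio \<longlonglongrightarrow> 1"
proof -
  have bdd: "bdd_above (range return_ratio)"
    using return_ratio_le_1 by (intro bdd_aboveI[of _ 1]) auto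
  let ?s = "SUP i. return_ratio i"
  have lim: "return_ratio \<longlonglongrightarrow> ?s"
    by (rule LIMSEQ_incseq_SUP[OF bdd incseq_return_ratio])
  have le: "return_ratio i \<le> ?s" for i
    using bdd by (intro cSUP_upper) auto
  have s1: "?s \<le> 1"
    using return_ratio_le_1 by (intro cSUP_least) auto
  have s0: "?s > 0"
    using le[of 0] return_ratio_pos[of 0] by simp
  have "?s = 1"
  proof (rule ccontr)
    assume "?s \<noteq> 1"
    then have "?s < 1"
      using s1 by simp
    then have "(\<lambda>n. return_prob 0 * (2 * (of_nat n * ?s ^ n) + ?s ^ n)) \<longlonglongrightarrow> return_prob 0 * (2 * 0 + 0)"
      using s0 by (intro tendsto_intros powser_times_n_limit_0 LIMSEQ_power_zero) auto
    then have "eventually (\<lambda>n. return_prob 0 * (2 * (of_nat n * ?s ^ n) + ?s ^ n) < 1) sequentially"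
      by (intro order_tendstoD) auto
    then obtain n where n: "return_prob 0 * (2 * (of_nat n * ?s ^ n) + ?s ^ n) < 1"
      by (auto simp: eventually_sequentially)
    have "1 / (2 * real n + 1) \<le> return_prob 0 * ?s ^ n"
      using return_prob_ge[of n] return_prob_le_power[OF le, of n] by simp
    then have "1 \<le> return_prob 0 * (2 * (of_nat n * ?s ^ n) + ?s ^ n)"
      by (simp add: field_simps)
    then show False
      using n by simp
  qed
  then show ?thesis
    using lim by simp
qed

lemma return_prob_shift_ratio: "(\<lambda>M. return_prob (M + k) / return_prob M) \<longlonglongrightarrow> 1"
proof (induction k)
  case 0
  show ?case
    using return_prob_pos by (simp add: less_imp_neq[symmetric])
next
  case (Suc k)
  have eq: "return_prob (M + Suc k) / return_prob M = return_ratio (M + k) * (return_prob (M + k) / return_prob M)" for M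
    unfolding return_ratio_def using return_prob_pos[of "M + k"] by simp
  have "(\<lambda>M. return_ratio (M + k)) \<longlonglongrightarrow> 1"
    using return_ratio_tendsto_1 by (rule LIMSEQ_ignore_initial_segment)
  then have "(\<lambda>M. return_ratio (M + k) * (return_prob (M + k) / return_prob M)) \<longlonglongrightarrow> 1 * 1"
    by (intro tendsto_mult Suc)
  then show ?case
    unfolding eq by simp
qed

text \<open>By \<open>free_walks_even_deficit\<close> with \<open>2 k \<ge> \<bar>d\<bar>\<close>, the relative deficit
  \<open>1 - free_walks \<sigma> (2 M) d / free_walks \<sigma> (2 M) 0\<close> is at most a multiple of
  \<open>1 - return_prob (M + k) / return_prob M\<close>, which tends to \<open>0\<close>.\<close>

lemma free_walks_even_ratio: "(\<lambda>M. free_walks \<sigma> (M + M) d / free_walks \<sigma> (M + M) 0) \<longlonglongrightarrow> 1"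
proof -
  define k where "k = nat \<bar>d\<bar>"
  let ?c = "(2 + \<sigma>) ^ (k + k)" and ?u = "free_walks \<sigma> (k + k) d"
  have d: "\<bar>d\<bar> \<le> int (k + k)"
    unfolding k_def by simp
  have u: "?u > 0"
    using free_walks_pos[OF \<sigma> d] .
  have shift: "free_walks \<sigma> (k + k + (M + M)) 0
      = ?c * free_walks \<sigma> (M + M) 0 * (return_prob (M + k) / return_prob M)" for M
  proof -
    have "M + k + (M + k) = k + k + (M + M)"
      by simp
    then show ?thesis
      using free_walks_0_pos[of "M + M"] \<sigma> unfolding return_prob_def by (simp add: power_add field_simps)
  qed
  define g where "g M = ?c * (1 - return_prob (M + k) / return_prob M) / ?u" for M
  have "(\<lambda>M. 1 - g M) \<longlonglongrightarrow> 1 - ?c * (1 - 1) / ?u"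
    unfolding g_def by (intro tendsto_intros return_prob_shift_ratio) (use u in simp)
  then have lower: "(\<lambda>M. 1 - g M) \<longlonglongrightarrow> 1"
    by simp
  have "1 - g M \<le> free_walks \<sigma> (M + M) d / free_walks \<sigma> (M + M) 0" for M
  proof -
    have "?u * (free_walks \<sigma> (M + M) 0 - free_walks \<sigma> (M + M) d)
        \<le> ?c * free_walks \<sigma> (M + M) 0 * (1 - return_prob (M + k) / return_prob M)"
      using free_walks_even_deficit[OF less_imp_le[OF \<sigma>] d, of M] shift[of M] by (simp add: algebra_simps)
    then show ?thesis
      unfolding g_def using u free_walks_0_pos[of "M + M"] by (simp add: field_simps)
  qed
  moreover have "free_walks \<sigma> (M + M) d / free_walks \<sigma> (M + M) 0 \<le> 1" for M
    using free_walks_even_le_0[OF less_imp_le[OF \<sigma>], of M d] free_walks_0_pos[of "M + M"] by simp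
  ultimately show ?thesis
    by (intro tendsto_sandwich[OF _ _ lower tendsto_const]) auto
qed

lemma free_walks_ratio: "(\<lambda>N. free_walks \<sigma> N d / free_walks \<sigma> N 0) \<longlonglongrightarrow> 1"
proof (rule tendsto_even_odd)
  show even: "(\<lambda>M. free_walks \<sigma> (M + M) d / free_walks \<sigma> (M + M) 0) \<longlonglongrightarrow> 1" for d
    by (rule free_walks_even_ratio)
  have odd: "(\<lambda>M. free_walks \<sigma> (Suc (M + M)) d / free_walks \<sigma> (M + M) 0) \<longlonglongrightarrow> 1 + \<sigma> * 1 + 1" for d
  proof -
    have "(\<lambda>M. free_walks \<sigma> (M + M) (d - 1) / free_walks \<sigma> (M + M) 0
              + \<sigma> * (free_walks \<sigma> (M + M) d / free_walks \<sigma> (M + M) 0)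
              + free_walks \<sigma> (M + M) (d + 1) / free_walks \<sigma> (M + M) 0) \<longlonglongrightarrow> 1 + \<sigma> * 1 + 1"
      by (intro tendsto_intros even)
    then show ?thesis
      by (simp add: free_walks.simps(2) add_divide_distrib)
  qed
  have eq: "(free_walks \<sigma> (Suc (M + M)) d / free_walks \<sigma> (M + M) 0)
        / (free_walks \<sigma> (Suc (M + M)) 0 / free_walks \<sigma> (M + M) 0)
      = free_walks \<sigma> (Suc (M + M)) d / free_walks \<sigma> (Suc (M + M)) 0" for M
    using free_walks_0_pos[of "M + M"] by simp
  have "(\<lambda>M. (free_walks \<sigma> (Suc (M + M)) d / free_walks \<sigma> (M + M) 0)
              / (free_walks \<sigma> (Suc (M + M)) 0 / free_walks \<sigma> (M + M) 0)) \<longlonglongrightarrow> (2 + \<sigma>) / (2 + \<sigma>)"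
    using odd[of d] odd[of 0] \<sigma> by (intro tendsto_divide) (auto simp: algebra_simps)
  then show "(\<lambda>M. free_walks \<sigma> (Suc (M + M)) d / free_walks \<sigma> (Suc (M + M)) 0) \<longlonglongrightarrow> 1"
    unfolding eq using \<sigma> by simp
qed

lemma free_walks_growth: "(\<lambda>N. free_walks \<sigma> (Suc N) 0 / free_walks \<sigma> N 0) \<longlonglongrightarrow> 2 + \<sigma>"
proof -
  have "(\<lambda>N. free_walks \<sigma> N (-1) / free_walks \<sigma> N 0 + \<sigma> + free_walks \<sigma> N 1 / free_walks \<sigma> N 0) \<longlonglongrightarrow> 1 + \<sigma> + 1"
    by (intro tendsto_intros free_walks_ratio)
  moreover have "free_walks \<sigma> (Suc N) 0 / free_walks \<sigma> N 0
      = free_walks \<sigma> N (-1) / free_walks \<sigma> N 0 + \<sigma> + free_walks \<sigma> N 1 / free_walks \<sigma> N 0" for N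
    using free_walks_0_pos[of N] by (simp add: free_walks.simps(2) add_divide_distrib)
  ultimately show ?thesis
    by simp
qed

lemma free_walks_le_center: "free_walks \<sigma> N d \<le> (2 + \<sigma>) / \<sigma> * free_walks \<sigma> N 0"
proof -
  have even: "free_walks \<sigma> (M + M) e \<le> free_walks \<sigma> (M + M) 0" for M e
    using free_walks_even_le_0[OF less_imp_le[OF \<sigma>]] .
  show ?thesis
  proof (cases "even N")
    case True
    then obtain M where N: "N = M + M"
      by (metis mult_2 evenE)
    have "1 \<le> (2 + \<sigma>) / \<sigma>"
      using \<sigma> by simp
    then show ?thesis
      using even[of M d] free_walks_0_pos[of N] N by (metis mult_1 mult_right_mono less_imp_le order_trans)
  next
    case False
    then obtain M where N: "N = Suc (M + M)"
      by (metis oddE mult_2 add.commute plus_1_eq_Suc)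
    have "\<sigma> * free_walks \<sigma> (M + M) d \<le> \<sigma> * free_walks \<sigma> (M + M) 0"
      using even[of M d] \<sigma> by (simp add: mult_left_mono)
    then have "free_walks \<sigma> N d \<le> (2 + \<sigma>) * free_walks \<sigma> (M + M) 0"
      using even[of M "d - 1"] even[of M "d + 1"]
      unfolding N free_walks.simps(2) by (simp add: algebra_simps)
    also have "\<dots> = (2 + \<sigma>) / \<sigma> * (\<sigma> * free_walks \<sigma> (M + M) 0)"
      using \<sigma> by simp
    also have "\<dots> \<le> (2 + \<sigma>) / \<sigma> * free_walks \<sigma> N 0"
      using \<sigma> free_walks_nonneg[of \<sigma> "M + M"] unfolding N free_walks.simps(2)
      by (intro mult_left_mono) auto
    finally show ?thesis .
  qed
qed

end

section \<open>Motzkin paths through free walks\<close>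

text \<open>Reflection principle: the weight of Motzkin paths from \<open>a\<close> to \<open>j\<close> is that of free walks from
  \<open>a\<close> to \<open>j\<close> minus that of free walks from \<open>a\<close> to the mirror image \<open>- j - 2\<close>.\<close>

lemma motzkin_op_reflection_one:
  "motzkin_op \<sigma> (\<lambda>b. \<Sum>i\<le>2 * b + 1. free_walks \<sigma> L (int i - int b)) a
     = (\<Sum>i\<le>2 * a + 1. free_walks \<sigma> (Suc L) (int i - int a))"
proof -
  let ?\<Phi> = "\<lambda>b. \<Sum>i\<le>2 * b + 1. free_walks \<sigma> L (int i - int b)"
  let ?A = "\<Sum>i\<le>2 * a + 1. free_walks \<sigma> L (int i - int a - 1)"
  let ?C = "\<Sum>i\<le>2 * a + 1. free_walks \<sigma> L (int i - int a + 1)"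
  have S: "(\<Sum>i\<le>2 * a + 1. free_walks \<sigma> (Suc L) (int i - int a)) = ?A + \<sigma> * ?\<Phi> a + ?C"
    unfolding free_walks.simps(2) sum.distrib sum_distrib_left by (rule refl)
  have "?\<Phi> (a + 1) = (\<Sum>i\<le>Suc (Suc (2 * a + 1)). free_walks \<sigma> L (int i - int a - 1))"
    by (intro sum.cong) (auto simp: algebra_simps)
  then have P: "?\<Phi> (a + 1) = ?A + free_walks \<sigma> L (int a + 1) + free_walks \<sigma> L (int a + 2)"
    by (simp add: algebra_simps)
  show ?thesis
  proof (cases a)
    case 0
    have "?C = free_walks \<sigma> L 1 + free_walks \<sigma> L 2"
      using 0 by (simp add: numeral_2_eq_2)
    then show ?thesis
      using S P 0 by (simp add: motzkin_op_def numeral_2_eq_2)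
  next
    case (Suc b)
    have "?C = (\<Sum>i\<le>Suc (Suc (2 * b + 1)). free_walks \<sigma> L (int i - int a + 1))"
      using Suc by (intro sum.cong) auto
    also have "\<dots> = ?\<Phi> b + free_walks \<sigma> L (int a + 1) + free_walks \<sigma> L (int a + 2)"
      using Suc by (simp add: algebra_simps)
    finally show ?thesis
      using S P Suc by (simp add: motzkin_op_def)
  qed
qed

lemma motzkin_op_pow_one:
  "(motzkin_op \<sigma> ^^ L) (\<lambda>_. 1) a = (\<Sum>i\<le>2 * a + 1. free_walks \<sigma> L (int i - int a))"
proof (induction L arbitrary: a)
  case 0
  have "(\<Sum>i\<le>2 * a + 1. free_walks \<sigma> 0 (int i - int a)) = (\<Sum>i\<le>2 * a + 1. if i = a then 1 else 0)"
    by (intro sum.cong) auto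
  then show ?case
    by simp
next
  case (Suc L)
  then have "(motzkin_op \<sigma> ^^ L) (\<lambda>_. 1) = (\<lambda>b. \<Sum>i\<le>2 * b + 1. free_walks \<sigma> L (int i - int b))"
    by auto
  then show ?case
    by (simp only: funpow.simps(2) o_apply motzkin_op_reflection_one)
qed

lemma motzkin_op_reflection_indicator:
  "motzkin_op \<sigma> (\<lambda>b. \<Sum>j<K. free_walks \<sigma> L (int j - int b) - free_walks \<sigma> L (int j + int b + 2)) a
     = (\<Sum>j<K. free_walks \<sigma> (Suc L) (int j - int a) - free_walks \<sigma> (Suc L) (int j + int a + 2))"
    (is "motzkin_op \<sigma> ?\<Psi> a = _")
proof (cases a)
  case 0
  then have "motzkin_op \<sigma> ?\<Psi> a = \<sigma> * ?\<Psi> 0 + ?\<Psi> 1"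
    by (simp add: motzkin_op_def)
  also have "\<dots> = (\<Sum>j<K. free_walks \<sigma> (Suc L) (int j - int a) - free_walks \<sigma> (Suc L) (int j + int a + 2))"
    unfolding 0 sum_distrib_left sum.distrib[symmetric]
    by (intro sum.cong refl) (simp add: free_walks.simps(2) algebra_simps)
  finally show ?thesis .
next
  case (Suc b)
  then have "motzkin_op \<sigma> ?\<Psi> a = ?\<Psi> b + \<sigma> * ?\<Psi> a + ?\<Psi> (a + 1)"
    by (simp add: motzkin_op_def)
  also have "\<dots> = (\<Sum>j<K. free_walks \<sigma> (Suc L) (int j - int a) - free_walks \<sigma> (Suc L) (int j + int a + 2))"
    unfolding Suc sum_distrib_left sum.distrib[symmetric]
    by (intro sum.cong refl) (simp add: free_walks.simps(2) algebra_simps)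
  finally show ?thesis .
qed

lemma motzkin_op_pow_indicator:
  "(motzkin_op \<sigma> ^^ L) (\<lambda>j. if j < K then 1 else 0) a
     = (\<Sum>j<K. free_walks \<sigma> L (int j - int a) - free_walks \<sigma> L (int j + int a + 2))"
proof (induction L arbitrary: a)
  case 0
  have "(\<Sum>j<K. free_walks \<sigma> 0 (int j - int a) - free_walks \<sigma> 0 (int j + int a + 2))
      = (\<Sum>j<K. if j = a then 1 else 0)"
    by (intro sum.cong) auto
  then show ?case
    by simp
next
  case (Suc L)
  then have "(motzkin_op \<sigma> ^^ L) (\<lambda>j. if j < K then 1 else 0)
      = (\<lambda>b. \<Sum>j<K. free_walks \<sigma> L (int j - int b) - free_walks \<sigma> L (int j + int b + 2))"
    by auto
  then show ?case
    by (simp only: funpow.simps(2) o_apply motzkin_op_reflection_indicator)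
qed

lemma motzkin_op_pow_one_ratio:
  assumes \<sigma>: "\<sigma> > 0"
  shows "(\<lambda>L. (motzkin_op \<sigma> ^^ L) (\<lambda>_. 1) a / free_walks \<sigma> L 0) \<longlonglongrightarrow> 2 * (real a + 1)"
proof -
  have "(\<lambda>L. (motzkin_op \<sigma> ^^ L) (\<lambda>_. 1) a / free_walks \<sigma> L 0) \<longlonglongrightarrow> (\<Sum>i\<le>2 * a + 1. 1)"
    unfolding motzkin_op_pow_one sum_divide_distrib by (intro tendsto_sum free_walks_ratio[OF \<sigma>])
  then show ?thesis
    by (simp add: algebra_simps)
qed

lemma motzkin_op_pow_one_le:
  assumes \<sigma>: "\<sigma> > 0"
  shows "(motzkin_op \<sigma> ^^ L) (\<lambda>_. 1) a \<le> free_walks \<sigma> L 0 * (2 * (real a + 1) * ((2 + \<sigma>) / \<sigma>))"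
proof -
  have "(motzkin_op \<sigma> ^^ L) (\<lambda>_. 1) a \<le> (\<Sum>i\<le>2 * a + 1. (2 + \<sigma>) / \<sigma> * free_walks \<sigma> L 0)"
    unfolding motzkin_op_pow_one by (intro sum_mono free_walks_le_center[OF \<sigma>])
  also have "\<dots> = free_walks \<sigma> L 0 * (2 * (real a + 1) * ((2 + \<sigma>) / \<sigma>))"
    using \<sigma> by (simp add: field_simps)
  finally show ?thesis .
qed

lemma motzkin_op_pow_indicator_ratio:
  assumes \<sigma>: "\<sigma> > 0"
  shows "(\<lambda>L. (motzkin_op \<sigma> ^^ L) (\<lambda>j. if j < K then 1 else 0) a / free_walks \<sigma> L 0) \<longlonglongrightarrow> 0"
proof -
  have "(\<lambda>L. \<Sum>j<K. free_walks \<sigma> L (int j - int a) / free_walks \<sigma> L 0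
                    - free_walks \<sigma> L (int j + int a + 2) / free_walks \<sigma> L 0) \<longlonglongrightarrow> (\<Sum>j<K. 1 - 1)"
    by (intro tendsto_sum tendsto_diff free_walks_ratio[OF \<sigma>])
  then show ?thesis
    by (simp add: motzkin_op_pow_indicator sum_divide_distrib diff_divide_distrib)
qed

section \<open>Asymptotics of the path measures\<close>

text \<open>\<open>Qker\<close> is the Doob transform of the step weights by the eigenfunction \<open>hfun \<rho>\<close>.\<close>

lemma Qker_eq:
  assumes \<rho>: "\<rho> \<ge> 1" and \<sigma>: "\<sigma> \<ge> 0"
  shows "Qker \<rho> \<sigma> n m = step_weight \<sigma> n m * hfun \<rho> m / (hfun \<rho> n * (\<rho> + 1 / \<rho> + \<sigma>))"
proof (cases "\<rho> = 1")
  case True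
  have nz: "real k + 1 \<noteq> 0" "2 + \<sigma> \<noteq> 0" for k
    using \<sigma> by (simp_all add: add_nonneg_eq_0_iff)
  have "step_weight \<sigma> n m * hfun \<rho> m / (hfun \<rho> n * (\<rho> + 1 / \<rho> + \<sigma>))
      = 1 / (2 + \<sigma>) * (step_weight \<sigma> n m * ((real m + 1) / (real n + 1)))"
    using True nz by (simp add: hfun_def field_simps)
  also have "\<dots> = Qker \<rho> \<sigma> n m"
    unfolding Qker_def step_weight_eq using True nz by (auto simp: add.commute)
  finally show ?thesis
    by simp
next
  case False
  have h: "hfun \<rho> k = (\<rho> ^ (k + 1) - inverse \<rho> ^ (k + 1)) / (\<rho> - inverse \<rho>)" for k
    using False by (simp add: hfun_def)
  have "\<rho> - inverse \<rho> \<noteq> 0" "\<rho> ^ (k + 1) - inverse \<rho> ^ (k + 1) \<noteq> 0" for k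
    using hfun_pos[OF \<rho>, of k] unfolding h by auto
  then have "hfun \<rho> m / hfun \<rho> n
      = (\<rho> ^ (m + 1) - inverse \<rho> ^ (m + 1)) / (\<rho> ^ (n + 1) - inverse \<rho> ^ (n + 1))"
    unfolding h by simp
  moreover have "\<rho> + 1 / \<rho> + \<sigma> > 0"
    using \<rho> \<sigma> by (simp add: add_pos_nonneg)
  then have "step_weight \<sigma> n m * hfun \<rho> m / (hfun \<rho> n * (\<rho> + 1 / \<rho> + \<sigma>))
      = 1 / (\<rho> + 1 / \<rho> + \<sigma>) * (step_weight \<sigma> n m * (hfun \<rho> m / hfun \<rho> n))"
    using hfun_pos[OF \<rho>, of n] by (simp add: field_simps)
  ultimately show ?thesis
    unfolding Qker_def step_weight_eq using False \<open>\<rho> ^ (n + 1) - inverse \<rho> ^ (n + 1) \<noteq> 0\<close>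
    by (auto simp: add.commute)
qed

lemma prod_Qker:
  assumes \<rho>: "\<rho> \<ge> 1" and \<sigma>: "\<sigma> \<ge> 0"
  shows "(\<Prod>k<K. Qker \<rho> \<sigma> (z k) (z (Suc k))) =
         (\<Prod>t\<in>{1..K}. step_weight \<sigma> (z (t - 1)) (z t)) * hfun \<rho> (z K)
           / (hfun \<rho> (z 0) * (\<rho> + 1 / \<rho> + \<sigma>) ^ K)"
proof (induction K)
  case 0
  show ?case
    using hfun_pos[OF \<rho>, of "z 0"] by simp
next
  case (Suc K)
  let ?l = "\<rho> + 1 / \<rho> + \<sigma>" and ?S = "\<Prod>t\<in>{1..K}. step_weight \<sigma> (z (t - 1)) (z t)"
    and ?w = "step_weight \<sigma> (z K) (z (Suc K))"
  have l: "?l > 0"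
    using \<rho> \<sigma> by (simp add: add_pos_nonneg)
  have "(\<Prod>k<Suc K. Qker \<rho> \<sigma> (z k) (z (Suc k)))
      = (?S * hfun \<rho> (z K) / (hfun \<rho> (z 0) * ?l ^ K)) * (?w * hfun \<rho> (z (Suc K)) / (hfun \<rho> (z K) * ?l))"
    by (simp only: prod.lessThan_Suc Suc.IH) (simp only: Qker_eq[OF \<rho> \<sigma>])
  also have "\<dots> = (?S * ?w) * hfun \<rho> (z (Suc K)) / (hfun \<rho> (z 0) * ?l ^ Suc K)"
  proof -
    have alg: "(a * b / (c * l ^ K)) * (w * d / (b * l)) = (a * w) * d / (c * l ^ Suc K)"
      if "b \<noteq> 0" "c \<noteq> 0" "l \<noteq> 0" for a b c d w l :: real
      using that by (simp add: field_simps)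
    show ?thesis
      by (rule alg) (use hfun_pos[OF \<rho>, of "z K"] hfun_pos[OF \<rho>, of "z 0"] l in auto)
  qed
  also have "?S * ?w = (\<Prod>t\<in>{1..Suc K}. step_weight \<sigma> (z (t - 1)) (z t))"
    by (simp add: prod.cl_ivl_Suc)
  finally show ?case .
qed

lemma prod_xilaw:
  "(\<Prod>k\<in>{1..K}. xilaw \<rho> \<sigma> (x k)) = (\<Prod>t\<in>{1..K}. increment_factor \<rho> \<sigma> (x (K + 1 - t))) / (\<rho> + 1 / \<rho> + \<sigma>) ^ K"
proof -
  have "(\<Prod>k\<in>{1..K}. xilaw \<rho> \<sigma> (x k)) = (\<Prod>k\<in>{1..K}. increment_factor \<rho> \<sigma> (x k) / (\<rho> + 1 / \<rho> + \<sigma>))"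
    by (intro prod.cong) (auto simp: xilaw_def increment_factor_def)
  also have "\<dots> = (\<Prod>t\<in>{1..K}. increment_factor \<rho> \<sigma> (x (K + 1 - t))) / (\<rho> + 1 / \<rho> + \<sigma>) ^ K"
    by (subst prod.atLeastAtMost_rev) (simp add: prod_dividef)
  finally show ?thesis .
qed

lemma tendsto_suminf_dominated:
  fixes f :: "nat \<Rightarrow> nat \<Rightarrow> real"
  assumes "\<And>a. (\<lambda>L. f L a) \<longlonglongrightarrow> g a" and "\<And>L a. \<bar>f L a\<bar> \<le> M a" and "summable M"
  shows "(\<lambda>L. \<Sum>a. f L a) \<longlonglongrightarrow> (\<Sum>a. g a)"
proof -
  have "eventually (\<lambda>(a, L). norm (f L a) \<le> M a) (at_top \<times>\<^sub>F sequentially)"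
    using assms(2) by (intro always_eventually) (auto simp: case_prod_beta)
  from tannerys_theorem[where a = "\<lambda>a L. f L a", OF assms(1) this assms(3)]
  show ?thesis
    by simp
qed

text \<open>The regimes \<open>\<rho> = 1\<close> and \<open>\<rho> > 1\<close> differ only in the scale \<open>c L\<close> of \<open>T^L \<beta>\<close>, namely
  \<open>free_walks \<sigma> L 0\<close> and \<open>(\<rho> + 1/\<rho> + \<sigma>) ^ L\<close>; the rest of the argument uses only the
  hypotheses of this locale.\<close>

locale endpoint_asymptotics =
  fixes \<sigma> \<rho> :: real and \<alpha> :: "nat \<Rightarrow> real" and c G :: "nat \<Rightarrow> real" and \<kappa> :: real
  assumes sigma_pos: "\<sigma> > 0" and rho_ge_1: "\<rho> \<ge> 1"
    and alpha_nonneg: "\<And>n. \<alpha> n \<ge> 0" and alpha_nonzero: "\<exists>n. \<alpha> n \<noteq> 0"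
    and scale_pos: "\<And>L. c L > 0" and kappa_pos: "\<kappa> > 0"
    and scale_growth: "(\<lambda>L. c (Suc L) / c L) \<longlonglongrightarrow> \<rho> + 1 / \<rho> + \<sigma>"
    and power_scaling: "\<And>a. (\<lambda>L. (motzkin_op \<sigma> ^^ L) (\<lambda>n. \<rho> ^ n) a / c L) \<longlonglongrightarrow> \<kappa> * hfun \<rho> a"
    and power_dominated: "\<And>L a. (motzkin_op \<sigma> ^^ L) (\<lambda>n. \<rho> ^ n) a \<le> c L * G a"
    and summable_dominant: "summable (\<lambda>a. \<alpha> a * G a)"
    and indicator_scaling:
      "\<And>K a. (\<lambda>L. (motzkin_op \<sigma> ^^ L) (\<lambda>j. if j < K then 1 else 0) a / c L) \<longlonglongrightarrow> 0"
begin

definition total_mass :: "nat \<Rightarrow> real" where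
  "total_mass L = (\<Sum>a. \<alpha> a * (motzkin_op \<sigma> ^^ L) (\<lambda>n. \<rho> ^ n) a)"

lemma growth_pos: "\<rho> + 1 / \<rho> + \<sigma> > 0"
  using rho_ge_1 sigma_pos by (simp add: add_pos_nonneg)

lemma motzkin_op_pow_power_nonneg: "(motzkin_op \<sigma> ^^ L) (\<lambda>n. \<rho> ^ n) a \<ge> 0"
  using sigma_pos rho_ge_1 by (intro motzkin_op_pow_nonneg) auto

lemma hfun_le_dominant: "\<kappa> * hfun \<rho> a \<le> G a"
proof (rule LIMSEQ_le_const2[OF power_scaling])
  show "\<exists>N. \<forall>L\<ge>N. (motzkin_op \<sigma> ^^ L) (\<lambda>n. \<rho> ^ n) a / c L \<le> G a"
    using power_dominated scale_pos by (simp add: divide_le_eq mult.commute)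
qed

lemma summable_hfun: "summable (\<lambda>a. \<alpha> a * hfun \<rho> a)"
proof (rule summable_comparison_test[OF _ summable_mult[OF summable_dominant, of "1 / \<kappa>"]])
  have "\<alpha> a * hfun \<rho> a \<le> 1 / \<kappa> * (\<alpha> a * G a)" for a
    using mult_left_mono[OF hfun_le_dominant alpha_nonneg, of a] kappa_pos by (simp add: field_simps)
  then show "\<exists>N. \<forall>a\<ge>N. norm (\<alpha> a * hfun \<rho> a) \<le> 1 / \<kappa> * (\<alpha> a * G a)"
    using alpha_nonneg hfun_pos[OF rho_ge_1] by (simp add: less_imp_le)
qed

lemma Cinit_eq: "Cinit \<alpha> \<rho> = (\<Sum>a. \<alpha> a * hfun \<rho> a)"
proof -
  have "((\<lambda>a. \<alpha> a * hfun \<rho> a) has_sum (\<Sum>a. \<alpha> a * hfun \<rho> a)) UNIV"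
    using summable_hfun alpha_nonneg hfun_pos[OF rho_ge_1]
    by (intro sums_nonneg_imp_has_sum) (auto simp: summable_sums less_imp_le)
  then show ?thesis
    unfolding Cinit_def by (rule infsumI)
qed

lemma Cinit_pos: "Cinit \<alpha> \<rho> > 0"
proof -
  obtain i where "\<alpha> i \<noteq> 0"
    using alpha_nonzero by blast
  then have "\<alpha> i * hfun \<rho> i > 0"
    using alpha_nonneg[of i] hfun_pos[OF rho_ge_1] by simp
  then show ?thesis
    unfolding Cinit_eq using summable_hfun alpha_nonneg hfun_pos[OF rho_ge_1]
    by (intro suminf_pos2[where i = i]) (auto simp: less_imp_le)
qed

lemma summable_weighted:
  assumes "\<And>a. Q a \<ge> 0" and "\<And>a. Q a \<le> (motzkin_op \<sigma> ^^ L) (\<lambda>n. \<rho> ^ n) a"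
  shows "summable (\<lambda>a. \<alpha> a * Q a)"
proof (rule summable_comparison_test[OF _ summable_mult[OF summable_dominant, of "c L"]])
  have "\<alpha> a * Q a \<le> c L * (\<alpha> a * G a)" for a
    using mult_left_mono[OF order_trans[OF assms(2) power_dominated] alpha_nonneg] by (simp add: mult_ac)
  then show "\<exists>N. \<forall>a\<ge>N. norm (\<alpha> a * Q a) \<le> c L * (\<alpha> a * G a)"
    using alpha_nonneg assms(1) by simp
qed

lemma tendsto_weighted_sum:
  assumes nonneg: "\<And>L a. Q L a \<ge> 0" and le: "\<And>L a. Q L a \<le> (motzkin_op \<sigma> ^^ L) (\<lambda>n. \<rho> ^ n) a"
    and lim: "\<And>a. (\<lambda>L. Q L a / c L) \<longlonglongrightarrow> q a"
  shows "(\<lambda>L. (\<Sum>a. \<alpha> a * Q L a) / c L) \<longlonglongrightarrow> (\<Sum>a. \<alpha> a * q a)"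
proof -
  have "(\<Sum>a. \<alpha> a * Q L a) / c L = (\<Sum>a. \<alpha> a * Q L a / c L)" for L
    using suminf_divide[OF summable_weighted[OF nonneg le], where c = "c L"] by simp
  moreover have "(\<lambda>L. \<Sum>a. \<alpha> a * Q L a / c L) \<longlonglongrightarrow> (\<Sum>a. \<alpha> a * q a)"
  proof (rule tendsto_suminf_dominated[OF _ _ summable_dominant])
    show "(\<lambda>L. \<alpha> a * Q L a / c L) \<longlonglongrightarrow> \<alpha> a * q a" for a
      using tendsto_mult_left[OF lim[of a], of "\<alpha> a"] by simp
    have "Q L a / c L \<le> G a" for L a
      using order_trans[OF le power_dominated] scale_pos[of L] by (simp add: divide_le_eq mult.commute)
    from mult_left_mono[OF this alpha_nonneg]
    show "\<bar>\<alpha> a * Q L a / c L\<bar> \<le> \<alpha> a * G a" for L a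
      using alpha_nonneg[of a] nonneg[of L a] scale_pos[of L] by simp
  qed
  ultimately show ?thesis
    by simp
qed

lemma total_mass_scaling: "(\<lambda>L. total_mass L / c L) \<longlonglongrightarrow> \<kappa> * Cinit \<alpha> \<rho>"
proof -
  have "(\<lambda>L. total_mass L / c L) \<longlonglongrightarrow> (\<Sum>a. \<alpha> a * (\<kappa> * hfun \<rho> a))"
    unfolding total_mass_def by (rule tendsto_weighted_sum[OF motzkin_op_pow_power_nonneg order_refl power_scaling])
  then show ?thesis
    using suminf_mult[OF summable_hfun, of \<kappa>] by (simp add: Cinit_eq mult_ac)
qed

lemma total_mass_pos: "total_mass L > 0"
proof -
  obtain i where "\<alpha> i \<noteq> 0"
    using alpha_nonzero by blast
  moreover have "(motzkin_op \<sigma> ^^ L) (\<lambda>n. \<rho> ^ n) i > 0"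
    using sigma_pos rho_ge_1 by (intro motzkin_op_pow_pos) auto
  ultimately have "\<alpha> i * (motzkin_op \<sigma> ^^ L) (\<lambda>n. \<rho> ^ n) i > 0"
    using alpha_nonneg[of i] by simp
  then show ?thesis
    unfolding total_mass_def
    using summable_weighted[OF motzkin_op_pow_power_nonneg order_refl] alpha_nonneg motzkin_op_pow_power_nonneg
    by (intro suminf_pos2[where i = i]) auto
qed

lemma Cpart_eq_total_mass: "Cpart \<alpha> (\<lambda>n. \<rho> ^ n) \<sigma> L = total_mass L"
proof -
  have "(pathmass \<alpha> (\<lambda>n. \<rho> ^ n) \<sigma> L has_sum total_mass L) {\<gamma>. motzkin L \<gamma> \<and> True}"
    unfolding total_mass_def
    using has_sum_pathmass_endpoint[where P = "\<lambda>_. True"] summable_weighted[OF motzkin_op_pow_power_nonneg order_refl]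
      alpha_nonneg sigma_pos rho_ge_1
    by simp
  then show ?thesis
    unfolding Cpart_def by (auto intro: infsumI)
qed

lemma scale_shift_ratio: "(\<lambda>M. c (M + N) / c M) \<longlonglongrightarrow> (\<rho> + 1 / \<rho> + \<sigma>) ^ N"
proof (induction N)
  case 0
  show ?case
    using scale_pos by (simp add: less_imp_neq[symmetric])
next
  case (Suc N)
  have eq: "c (M + Suc N) / c M = c (Suc (M + N)) / c (M + N) * (c (M + N) / c M)" for M
    using scale_pos[of "M + N"] by simp
  have "(\<lambda>M. c (Suc (M + N)) / c (M + N)) \<longlonglongrightarrow> \<rho> + 1 / \<rho> + \<sigma>"
    using LIMSEQ_ignore_initial_segment[OF scale_growth, of N] by simp
  then have "(\<lambda>M. c (Suc (M + N)) / c (M + N) * (c (M + N) / c M)) \<longlonglongrightarrow> (\<rho> + 1 / \<rho> + \<sigma>) * (\<rho> + 1 / \<rho> + \<sigma>) ^ N"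
    by (intro tendsto_mult Suc.IH)
  then show ?case
    unfolding eq by simp
qed

lemma tendsto_div_total_mass_shift:
  assumes "(\<lambda>M. Q M / c M) \<longlonglongrightarrow> q"
  shows "(\<lambda>M. Q M / total_mass (M + N)) \<longlonglongrightarrow> q / ((\<rho> + 1 / \<rho> + \<sigma>) ^ N * (\<kappa> * Cinit \<alpha> \<rho>))"
proof -
  have "Q M / total_mass (M + N) = Q M / c M * inverse (c (M + N) / c M) * inverse (total_mass (M + N) / c (M + N))" for M
    using scale_pos[of M] scale_pos[of "M + N"] by (simp add: field_simps)
  moreover have "(\<lambda>M. Q M / c M * inverse (c (M + N) / c M) * inverse (total_mass (M + N) / c (M + N)))
      \<longlonglongrightarrow> q * inverse ((\<rho> + 1 / \<rho> + \<sigma>) ^ N) * inverse (\<kappa> * Cinit \<alpha> \<rho>)"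
    using growth_pos kappa_pos Cinit_pos
    by (intro tendsto_mult tendsto_inverse assms scale_shift_ratio
          LIMSEQ_ignore_initial_segment[OF total_mass_scaling]) auto
  ultimately show ?thesis
    by (simp add: field_simps)
qed

lemma PrL_endpoint_above_eq:
  "PrL \<alpha> (\<lambda>n. \<rho> ^ n) \<sigma> L (\<lambda>\<gamma>. \<gamma> L > M)
     = 1 - (\<Sum>a. \<alpha> a * (motzkin_op \<sigma> ^^ L) (\<lambda>j. if j \<le> M then \<rho> ^ j else 0) a) / total_mass L"
proof -
  let ?\<beta> = "\<lambda>n::nat. \<rho> ^ n" and ?Q = "(motzkin_op \<sigma> ^^ L) (\<lambda>j. if j \<le> M then \<rho> ^ j else 0)"
  have "?Q a \<ge> 0" "?Q a \<le> (motzkin_op \<sigma> ^^ L) ?\<beta> a" for a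
    using sigma_pos rho_ge_1 by (auto intro!: motzkin_op_pow_nonneg motzkin_op_pow_mono)
  then have summable_Q: "summable (\<lambda>a. \<alpha> a * ?Q a)"
    by (rule summable_weighted)
  have "(\<lambda>j. if M < j then ?\<beta> j else 0) = (\<lambda>j. ?\<beta> j - (if j \<le> M then ?\<beta> j else 0))"
    by (auto simp: fun_eq_iff)
  then have above: "(motzkin_op \<sigma> ^^ L) (\<lambda>j. if M < j then ?\<beta> j else 0) a
      = (motzkin_op \<sigma> ^^ L) ?\<beta> a - ?Q a" for a
    by (simp only: motzkin_op_pow_diff)
  have "(pathmass \<alpha> ?\<beta> \<sigma> L has_sum (\<Sum>a. \<alpha> a * (motzkin_op \<sigma> ^^ L) (\<lambda>j. if M < j then ?\<beta> j else 0) a))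
          {\<gamma>. motzkin L \<gamma> \<and> M < \<gamma> L}"
    using summable_diff[OF summable_weighted[OF motzkin_op_pow_power_nonneg order_refl] summable_Q]
      alpha_nonneg sigma_pos rho_ge_1
    by (intro has_sum_pathmass_endpoint) (auto simp: above right_diff_distrib)
  then have "infsum (pathmass \<alpha> ?\<beta> \<sigma> L) {\<gamma>. motzkin L \<gamma> \<and> M < \<gamma> L}
      = (\<Sum>a. \<alpha> a * (motzkin_op \<sigma> ^^ L) ?\<beta> a - \<alpha> a * ?Q a)"
    by (simp add: infsumI above right_diff_distrib)
  also have "\<dots> = total_mass L - (\<Sum>a. \<alpha> a * ?Q a)"
    unfolding total_mass_def
    by (rule suminf_diff[OF summable_weighted[OF motzkin_op_pow_power_nonneg order_refl] summable_Q, symmetric])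
  finally show ?thesis
    unfolding PrL_def Cpart_eq_total_mass using total_mass_pos[of L] by (simp add: diff_divide_distrib)
qed

text \<open>Paths ending at height at most \<open>M\<close> have total weight \<open>o(c L)\<close> by \<open>indicator_scaling\<close>,
  while the total mass is of order \<open>c L\<close>.\<close>

lemma tendsto_low_endpoint_mass:
  "(\<lambda>L. (\<Sum>a. \<alpha> a * (motzkin_op \<sigma> ^^ L) (\<lambda>j. if j \<le> M then \<rho> ^ j else 0) a) / total_mass L) \<longlonglongrightarrow> 0"
proof -
  let ?Q = "\<lambda>L. (motzkin_op \<sigma> ^^ L) (\<lambda>j. if j \<le> M then \<rho> ^ j else 0)"
    and ?R = "\<lambda>L. (motzkin_op \<sigma> ^^ L) (\<lambda>j. if j < Suc M then 1 else 0)"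
  have Q_nonneg: "?Q L a \<ge> 0" and Q_le: "?Q L a \<le> (motzkin_op \<sigma> ^^ L) (\<lambda>n. \<rho> ^ n) a"
    and R_nonneg: "?R L a \<ge> 0" and R_le: "?R L a \<le> (motzkin_op \<sigma> ^^ L) (\<lambda>n. \<rho> ^ n) a" for L a
    using sigma_pos rho_ge_1 by (auto intro!: motzkin_op_pow_nonneg motzkin_op_pow_mono)
  have Q_le_R: "\<alpha> a * ?Q L a \<le> \<rho> ^ M * (\<alpha> a * ?R L a)" for L a
  proof -
    have "?Q L a \<le> (motzkin_op \<sigma> ^^ L) (\<lambda>j. \<rho> ^ M * (if j < Suc M then 1 else 0)) a"
      using sigma_pos rho_ge_1 by (intro motzkin_op_pow_mono) (auto intro: power_increasing)
    then show ?thesis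
      using mult_left_mono[OF _ alpha_nonneg] by (simp add: motzkin_op_pow_cmult mult.left_commute)
  qed
  have "(\<lambda>L. (\<Sum>a. \<alpha> a * ?R L a) / c L) \<longlonglongrightarrow> (\<Sum>a. \<alpha> a * 0)"
    by (rule tendsto_weighted_sum[OF R_nonneg R_le indicator_scaling])
  from tendsto_mult_left[OF tendsto_div_total_mass_shift[OF this, where N = 0], of "\<rho> ^ M"]
  have R: "(\<lambda>L. \<rho> ^ M * ((\<Sum>a. \<alpha> a * ?R L a) / total_mass L)) \<longlonglongrightarrow> 0"
    by simp
  show ?thesis
  proof (rule tendsto_sandwich[OF _ _ tendsto_const R])
    show "\<forall>\<^sub>F L in sequentially. 0 \<le> (\<Sum>a. \<alpha> a * ?Q L a) / total_mass L"
      using total_mass_pos alpha_nonneg Q_nonneg summable_weighted[OF Q_nonneg Q_le]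
      by (intro always_eventually allI divide_nonneg_pos suminf_nonneg) auto
    have "(\<Sum>a. \<alpha> a * ?Q L a) \<le> \<rho> ^ M * (\<Sum>a. \<alpha> a * ?R L a)" for L
      using Q_le_R summable_weighted[OF Q_nonneg Q_le] summable_weighted[OF R_nonneg R_le]
      by (subst suminf_mult[symmetric]) (auto intro: suminf_le summable_mult)
    from divide_right_mono[OF this less_imp_le[OF total_mass_pos]]
    show "\<forall>\<^sub>F L in sequentially. (\<Sum>a. \<alpha> a * ?Q L a) / total_mass L
                  \<le> \<rho> ^ M * ((\<Sum>a. \<alpha> a * ?R L a) / total_mass L)"
      by (intro always_eventually allI) simp
  qed
qed

lemma tendsto_PrL_endpoint_above: "(\<lambda>L. PrL \<alpha> (\<lambda>n. \<rho> ^ n) \<sigma> L (\<lambda>\<gamma>. \<gamma> L > M)) \<longlonglongrightarrow> 1"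
  unfolding PrL_endpoint_above_eq
  using tendsto_diff[OF tendsto_const tendsto_low_endpoint_mass, of 1] by simp

lemma not_tight: "\<not> (\<forall>\<epsilon>>0. \<exists>M::nat. \<forall>L\<ge>1. PrL \<alpha> (\<lambda>n. \<rho> ^ n) \<sigma> L (\<lambda>\<gamma>. \<gamma> L > M) \<le> \<epsilon>)"
proof
  assume "\<forall>\<epsilon>>0. \<exists>M::nat. \<forall>L\<ge>1. PrL \<alpha> (\<lambda>n. \<rho> ^ n) \<sigma> L (\<lambda>\<gamma>. \<gamma> L > M) \<le> \<epsilon>"
  then obtain M :: nat where M: "\<And>L. L \<ge> 1 \<Longrightarrow> PrL \<alpha> (\<lambda>n. \<rho> ^ n) \<sigma> L (\<lambda>\<gamma>. \<gamma> L > M) \<le> 1 / 2"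
    by (meson half_gt_zero zero_less_one)
  have "\<forall>\<^sub>F L in sequentially. PrL \<alpha> (\<lambda>n. \<rho> ^ n) \<sigma> L (\<lambda>\<gamma>. \<gamma> L > M) > 1 / 2"
    by (rule order_tendstoD[OF tendsto_PrL_endpoint_above]) simp
  then obtain L0 where "\<And>L. L \<ge> L0 \<Longrightarrow> PrL \<alpha> (\<lambda>n. \<rho> ^ n) \<sigma> L (\<lambda>\<gamma>. \<gamma> L > M) > 1 / 2"
    by (auto simp: eventually_sequentially)
  then have "PrL \<alpha> (\<lambda>n. \<rho> ^ n) \<sigma> (max L0 1) (\<lambda>\<gamma>. \<gamma> (max L0 1) > M) > 1 / 2"
    by simp
  moreover have "PrL \<alpha> (\<lambda>n. \<rho> ^ n) \<sigma> (max L0 1) (\<lambda>\<gamma>. \<gamma> (max L0 1) > M) \<le> 1 / 2"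
    using M by simp
  ultimately show False
    by simp
qed

lemma tendsto_op_pow_perturbed:
  assumes close: "\<And>j. \<bar>g j - b * \<rho> ^ j\<bar> \<le> E * (if j < K then 1 else 0)"
  shows "(\<lambda>M. (motzkin_op \<sigma> ^^ M) g a / total_mass (M + N))
           \<longlonglongrightarrow> b * (\<kappa> * hfun \<rho> a) / ((\<rho> + 1 / \<rho> + \<sigma>) ^ N * (\<kappa> * Cinit \<alpha> \<rho>))"
proof -
  define r where "r j = g j - b * \<rho> ^ j" for j
  have g: "(motzkin_op \<sigma> ^^ M) g a = b * (motzkin_op \<sigma> ^^ M) (\<lambda>n. \<rho> ^ n) a + (motzkin_op \<sigma> ^^ M) r a" for M
  proof -
    have "g = (\<lambda>j. b * \<rho> ^ j + r j)"
      unfolding r_def by simp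
    then show ?thesis
      by (simp only: motzkin_op_pow_add motzkin_op_pow_cmult)
  qed
  have "\<bar>(motzkin_op \<sigma> ^^ M) r a\<bar> \<le> (motzkin_op \<sigma> ^^ M) (\<lambda>j. E * (if j < K then 1 else 0)) a" for M
    using sigma_pos close unfolding r_def by (intro motzkin_op_pow_abs_le) auto
  then have r_le: "norm ((motzkin_op \<sigma> ^^ M) r a / total_mass (M + N))
      \<le> E * ((motzkin_op \<sigma> ^^ M) (\<lambda>j. if j < K then 1 else 0) a / total_mass (M + N))" for M
    using total_mass_pos[of "M + N"] by (simp add: motzkin_op_pow_cmult abs_divide divide_right_mono)
  have r: "(\<lambda>M. (motzkin_op \<sigma> ^^ M) r a / total_mass (M + N)) \<longlonglongrightarrow> 0"
  proof (rule Lim_null_comparison)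
    show "\<forall>\<^sub>F M in sequentially. norm ((motzkin_op \<sigma> ^^ M) r a / total_mass (M + N))
            \<le> E * ((motzkin_op \<sigma> ^^ M) (\<lambda>j. if j < K then 1 else 0) a / total_mass (M + N))"
      using r_le by (intro always_eventually allI)
    show "(\<lambda>M. E * ((motzkin_op \<sigma> ^^ M) (\<lambda>j. if j < K then 1 else 0) a / total_mass (M + N))) \<longlonglongrightarrow> 0"
      using tendsto_mult_left[OF tendsto_div_total_mass_shift[OF indicator_scaling], of E] by simp
  qed
  have "(\<lambda>M. b * ((motzkin_op \<sigma> ^^ M) (\<lambda>n. \<rho> ^ n) a / total_mass (M + N))
              + (motzkin_op \<sigma> ^^ M) r a / total_mass (M + N))
      \<longlonglongrightarrow> b * (\<kappa> * hfun \<rho> a / ((\<rho> + 1 / \<rho> + \<sigma>) ^ N * (\<kappa> * Cinit \<alpha> \<rho>))) + 0"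
    by (intro tendsto_intros tendsto_div_total_mass_shift power_scaling r)
  then show ?thesis
    unfolding g using kappa_pos by (simp add: add_divide_distrib)
qed

theorem tendsto_PrL_cylinder:
  "(\<lambda>L. PrL \<alpha> (\<lambda>n. \<rho> ^ n) \<sigma> L (\<lambda>\<gamma>. (\<forall>k\<le>K. \<gamma> k = z k) \<and> (\<forall>k\<in>{1..K}. incr L \<gamma> k = x k)))
     \<longlonglongrightarrow> Z0law \<alpha> \<rho> (z 0) * (\<Prod>k<K. Qker \<rho> \<sigma> (z k) (z (Suc k))) * (\<Prod>k\<in>{1..K}. xilaw \<rho> \<sigma> (x k))"
proof -
  let ?\<beta> = "\<lambda>n::nat. \<rho> ^ n" and ?l = "\<rho> + 1 / \<rho> + \<sigma>" and ?C = "Cinit \<alpha> \<rho>"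
  let ?g = "transfers (increment_weight \<sigma> (\<lambda>t. x (K + 1 - t))) K ?\<beta>"
    and ?b = "\<Prod>t\<in>{1..K}. increment_factor \<rho> \<sigma> (x (K + 1 - t))"
    and ?S = "\<Prod>t\<in>{1..K}. step_weight \<sigma> (z (t - 1)) (z t)"
  obtain E where E: "\<And>j. \<bar>?g j - ?b * \<rho> ^ j\<bar> \<le> E * (if j < K then 1 else 0)"
    using transfers_increments_perturbation[where y = "\<lambda>t. x (K + 1 - t)" and K = K,
        OF rho_ge_1 less_imp_le[OF sigma_pos]] by blast
  have event: "(\<lambda>\<gamma>. (\<forall>k\<le>K. \<gamma> k = z k) \<and> (\<forall>k\<in>{1..K}. incr L \<gamma> k = x k)) = cylinder_event K z x L" for L
    by (simp add: fun_eq_iff cylinder_event_def)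
  have Pr: "PrL \<alpha> ?\<beta> \<sigma> (M + (K + K)) (cylinder_event K z x (M + (K + K)))
      = \<alpha> (z 0) * ?S * ((motzkin_op \<sigma> ^^ M) ?g (z K) / total_mass (M + (K + K)))" for M
    using infsum_pathmass_cylinder[of \<alpha> ?\<beta> \<sigma> K M z x]
    unfolding PrL_def Cpart_eq_total_mass by (simp add: add_ac)
  have "(\<lambda>M. \<alpha> (z 0) * ?S * ((motzkin_op \<sigma> ^^ M) ?g (z K) / total_mass (M + (K + K))))
      \<longlonglongrightarrow> \<alpha> (z 0) * ?S * (?b * (\<kappa> * hfun \<rho> (z K)) / (?l ^ (K + K) * (\<kappa> * ?C)))"
    by (intro tendsto_mult_left tendsto_op_pow_perturbed[OF E])
  then have "(\<lambda>M. PrL \<alpha> ?\<beta> \<sigma> (M + (K + K)) (cylinder_event K z x (M + (K + K))))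
      \<longlonglongrightarrow> \<alpha> (z 0) * ?S * (?b * (\<kappa> * hfun \<rho> (z K)) / (?l ^ (K + K) * (\<kappa> * ?C)))"
    by (simp only: Pr)
  moreover have "\<alpha> (z 0) * ?S * (?b * (\<kappa> * hfun \<rho> (z K)) / (?l ^ (K + K) * (\<kappa> * ?C)))
      = Z0law \<alpha> \<rho> (z 0) * (\<Prod>k<K. Qker \<rho> \<sigma> (z k) (z (Suc k))) * (\<Prod>k\<in>{1..K}. xilaw \<rho> \<sigma> (x k))"
  proof -
    have alg: "a * s * (b * (k * h') / (l ^ (K + K) * (k * C)))
        = a * h / C * (s * h' / (h * l ^ K)) * (b / l ^ K)"
      if "k > 0" "C > 0" "h > 0" "l > 0" for a s b k h h' C l :: real
      using that by (simp add: field_simps power_add)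
    show ?thesis
      unfolding Z0law_def prod_Qker[OF rho_ge_1 less_imp_le[OF sigma_pos]] prod_xilaw
      by (rule alg) (use kappa_pos Cinit_pos hfun_pos[OF rho_ge_1] growth_pos in auto)
  qed
  ultimately show ?thesis
    unfolding event by (simp add: LIMSEQ_offset[where k = "K + K"])
qed

end

section \<open>The two regimes\<close>

lemma summable_of_summable_index_times:
  fixes a :: "nat \<Rightarrow> real"
  assumes "\<And>m. a m \<ge> 0" and "summable (\<lambda>m. real m * a m)"
  shows "summable a"
proof (rule summable_comparison_test[OF _ assms(2)])
  have "a m \<le> real m * a m" if "m \<ge> 1" for m
    using mult_right_mono[of 1 "real m" "a m"] that assms(1) by simp
  then show "\<exists>N. \<forall>m\<ge>N. norm (a m) \<le> real m * a m"
    using assms(1) by (intro exI[of _ 1]) auto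
qed

lemma endpoint_asymptotics_rho_1:
  fixes \<alpha> :: "nat \<Rightarrow> real"
  assumes \<sigma>: "\<sigma> > 0" and \<alpha>: "\<And>n. \<alpha> n \<ge> 0" "\<exists>n. \<alpha> n \<noteq> 0"
    and summable: "summable (\<lambda>m. real m * \<alpha> m)"
  shows "endpoint_asymptotics \<sigma> 1 \<alpha> (\<lambda>L. free_walks \<sigma> L 0) (\<lambda>a. 2 * (real a + 1) * ((2 + \<sigma>) / \<sigma>)) 2"
proof
  have "summable (\<lambda>m. real m * \<alpha> m + \<alpha> m)"
    using summable summable_of_summable_index_times[OF \<alpha>(1) summable] by (rule summable_add)
  then have "summable (\<lambda>a. 2 * ((2 + \<sigma>) / \<sigma>) * (real a * \<alpha> a + \<alpha> a))"
    by (rule summable_mult)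
  moreover have "(\<lambda>a. \<alpha> a * (2 * (real a + 1) * ((2 + \<sigma>) / \<sigma>)))
      = (\<lambda>a. 2 * ((2 + \<sigma>) / \<sigma>) * (real a * \<alpha> a + \<alpha> a))"
    using \<sigma> by (simp add: fun_eq_iff field_simps)
  ultimately show "summable (\<lambda>a. \<alpha> a * (2 * (real a + 1) * ((2 + \<sigma>) / \<sigma>)))"
    by simp
  show "(\<lambda>L. free_walks \<sigma> (Suc L) 0 / free_walks \<sigma> L 0) \<longlonglongrightarrow> 1 + 1 / 1 + \<sigma>"
    using free_walks_growth[OF \<sigma>] by simp
  show "(\<lambda>L. (motzkin_op \<sigma> ^^ L) (\<lambda>n. 1 ^ n) a / free_walks \<sigma> L 0) \<longlonglongrightarrow> 2 * hfun 1 a" for a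
    using motzkin_op_pow_one_ratio[OF \<sigma>] by (simp add: hfun_def)
  show "(motzkin_op \<sigma> ^^ L) (\<lambda>n. 1 ^ n) a \<le> free_walks \<sigma> L 0 * (2 * (real a + 1) * ((2 + \<sigma>) / \<sigma>))"
    for L a
    using motzkin_op_pow_one_le[OF \<sigma>] by simp
qed (use \<sigma> \<alpha> free_walks_0_pos[OF \<sigma>] motzkin_op_pow_indicator_ratio[OF \<sigma>] in auto)

lemma endpoint_asymptotics_rho_gt_1:
  fixes \<alpha> :: "nat \<Rightarrow> real"
  assumes \<sigma>: "\<sigma> > 0" and \<rho>: "\<rho> > 1" and \<alpha>: "\<And>n. \<alpha> n \<ge> 0" "\<exists>n. \<alpha> n \<noteq> 0"
    and summable: "summable (\<lambda>m. real m * \<alpha> m * \<rho> ^ m)"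
  shows "endpoint_asymptotics \<sigma> \<rho> \<alpha> (\<lambda>L. (\<rho> + 1 / \<rho> + \<sigma>) ^ L) (\<lambda>a. \<rho> ^ a) ((\<rho> - inverse \<rho>) / \<rho>)"
proof
  let ?l = "\<rho> + 1 / \<rho> + \<sigma>"
  have l: "?l > 0"
    using succ_growth_less[OF \<rho>, of \<sigma>] \<sigma> by simp
  show "(\<lambda>L. (motzkin_op \<sigma> ^^ L) (\<lambda>j. if j < K then 1 else 0) a / ?l ^ L) \<longlonglongrightarrow> 0" for K a
    using \<sigma> \<rho> by (intro motzkin_op_pow_bounded_scaling) auto
  show "(motzkin_op \<sigma> ^^ L) (\<lambda>n. \<rho> ^ n) a \<le> ?l ^ L * \<rho> ^ a" for L a
    using \<sigma> \<rho> by (intro motzkin_op_pow_power_le) auto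
  show "summable (\<lambda>a. \<alpha> a * \<rho> ^ a)"
  proof (rule summable_of_summable_index_times)
    show "\<alpha> m * \<rho> ^ m \<ge> 0" for m
      using \<alpha>(1)[of m] \<rho> by simp
    show "summable (\<lambda>m. real m * (\<alpha> m * \<rho> ^ m))"
      using summable by (simp add: mult.assoc)
  qed
  show "(\<rho> - inverse \<rho>) / \<rho> > 0"
    using \<rho> by (simp add: inverse_less_1_iff less_trans[of "inverse \<rho>" 1 \<rho>])
  show "(\<lambda>L. ?l ^ Suc L / ?l ^ L) \<longlonglongrightarrow> ?l" and "?l ^ L > 0" for L
    using l by simp_all
qed (use \<sigma> \<rho> \<alpha> motzkin_op_pow_power_scaling in auto)

theorem theorem1p2:
  fixes \<sigma> \<rho>1 :: real and \<alpha> :: "nat \<Rightarrow> real"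
  assumes "\<sigma> > 0" and "\<rho>1 \<ge> 1"
    and "\<forall>n. \<alpha> n \<ge> 0" and "\<exists>n. \<alpha> n \<noteq> 0"
    and "summable (\<lambda>m. real m * \<alpha> m * \<rho>1 ^ m)"
  shows "\<not> (\<forall>\<epsilon>>0. \<exists>M::nat. \<forall>L\<ge>1.
             PrL \<alpha> (\<lambda>n. \<rho>1 ^ n) \<sigma> L (\<lambda>\<gamma>. \<gamma> L > M) \<le> \<epsilon>)
      \<and> (\<forall>(K::nat) (z::nat \<Rightarrow> nat) (x::nat \<Rightarrow> int).
           (\<lambda>L. PrL \<alpha> (\<lambda>n. \<rho>1 ^ n) \<sigma> L
                   (\<lambda>\<gamma>. (\<forall>k\<le>K. \<gamma> k = z k) \<and> (\<forall>k\<in>{1..K}. incr L \<gamma> k = x k)))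
           \<longlonglongrightarrow> Z0law \<alpha> \<rho>1 (z 0) * (\<Prod>k<K. Qker \<rho>1 \<sigma> (z k) (z (Suc k)))
                 * (\<Prod>k\<in>{1..K}. xilaw \<rho>1 \<sigma> (x k)))"
proof -
  obtain c G \<kappa> where "endpoint_asymptotics \<sigma> \<rho>1 \<alpha> c G \<kappa>"
  proof (cases "\<rho>1 = 1")
    case True
    have "endpoint_asymptotics \<sigma> 1 \<alpha> (\<lambda>L. free_walks \<sigma> L 0) (\<lambda>a. 2 * (real a + 1) * ((2 + \<sigma>) / \<sigma>)) 2"
      using assms True by (intro endpoint_asymptotics_rho_1) auto
    with True that show ?thesis
      by blast
  next
    case False
    then have "\<rho>1 > 1"
      using assms(2) by simp
    show ?thesis
      by (rule that[OF endpoint_asymptotics_rho_gt_1]) (use assms \<open>\<rho>1 > 1\<close> in auto)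
  qed
  then interpret endpoint_asymptotics \<sigma> \<rho>1 \<alpha> c G \<kappa> .
  show ?thesis
    using not_tight tendsto_PrL_cylinder by blast
qed

end
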